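(* Let $X$ be a smooth projective complex toric variety, $J$ a subgroup of $\operatorname{AutP}(X)$, and $W$ the preimage of $J$ in $\operatorname{Aut}(\Sigma)$. There exist isomorphisms \[ H^1(W,M)\cong\operatorname{coker}\left(\operatorname{TDiv}(X)^W\to\operatorname{Pic}(X)^J\right)\cong\operatorname{Am}^T(X,J). \]
   Context: Toric setup: $T$ torus, $N$ cocharacter lattice, $M$ character lattice, $\Sigma$ fan with rays $\rho_1,\ldots,\rho_r$; $\operatorname{TDiv}(X)$ is free on the torus-invariant prime divisors $D_{\rho_j}$, with exact sequence $0\to M\to\operatorname{TDiv}(X)\to\operatorname{Pic}(X)\to0$. $\operatorname{Aut}(\Sigma)$ is the group of lattice automorphisms of $N$ preserving $\Sigma$; it acts on $M$ (dually) and on $\operatorname{TDiv}(X)$ (permuting the $D_{\rho_j}$) compatibly with the sequence, hence on $\operatorname{Pic}(X)$, giving a homomorphism $\operatorname{Aut}(\Sigma)\to\operatorname{Aut}(\operatorname{Pic}(X))$ whose image is $\operatorname{AutP}(X)$, the image of $\operatorname{Aut}(X)\to\operatorname{Aut}(\operatorname{Pic}(X))$, $g\mapsto(g^\ast)^{-1}$; $W$ is the preimage of $J$ under this homomorphism. Let $[D_1],\ldots,[D_s]$ be the distinct linear equivalence classes of the $D_{\rho_j}$ and $n_i$ the number of rays with divisor in class $[D_i]$. For $[D]\in\operatorname{Pic}(X)$, $\langle D\rangle_J:=\sum_{[E]\in J\cdot[D]}[E]$. $\operatorname{Pic}^T(X,J):=\langle n_i\langle D_i\rangle_J\mid1\le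 i\le s\rangle$ and $\operatorname{Am}^T(X,J):=\operatorname{Pic}(X)^J/\operatorname{Pic}^T(X,J)$. *)

theory Defs
  imports "HOL-Analysis.Finite_Cartesian_Product" "HOL-Algebra.Algebra"
begin

text \<open>The cocharacter lattice is N = int^'n (n = CARD('n)).
  A fan is encoded (it is smooth, hence simplicial) as the set of its cones, each cone
  given by the finite set of primitive generators of its rays. The character lattice
  M = Hom(N, Z) is the set of additive maps N \<Rightarrow> int.\<close>

type_synonym 'n lat = "int ^ 'n"

definition additive_map :: "('a::plus \<Rightarrow> 'b::plus) \<Rightarrow> bool" where
  "additive_map f \<longleftrightarrow> (\<forall>x y. f (x + y) = f x + f y)"

definition charlat :: "(('n::finite) lat \<Rightarrow> int) set" where
  "charlat = {m. additive_map m}"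

definition in_cone :: "('n::finite) lat set \<Rightarrow> real ^ 'n \<Rightarrow> bool" where
  "in_cone \<sigma> x \<longleftrightarrow> (\<exists>a. (\<forall>v\<in>\<sigma>. a v \<ge> 0) \<and>
      (\<forall>i. x $ i = (\<Sum>v\<in>\<sigma>. a v * real_of_int (v $ i))))"

definition zbasis :: "('n::finite) lat set \<Rightarrow> bool" where
  "zbasis B \<longleftrightarrow> finite B \<and> (\<forall>x. \<exists>!c. (\<forall>v. v \<notin> B \<longrightarrow> c v = 0) \<and>
      (\<forall>i. x $ i = (\<Sum>v\<in>B. c v * v $ i)))"

definition rays :: "('n::finite) lat set set \<Rightarrow> ('n::finite) lat set" where
  "rays \<Sigma> = \<Union>\<Sigma>"

definition max_cone :: "('n::finite) lat set set \<Rightarrow> ('n::finite) lat set \<Rightarrow> bool" where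
  "max_cone \<Sigma> \<sigma> \<longleftrightarrow> \<sigma> \<in> \<Sigma> \<and> (\<forall>\<tau>\<in>\<Sigma>. \<sigma> \<subseteq> \<tau> \<longrightarrow> \<tau> = \<sigma>)"

definition smooth_fan :: "('n::finite) lat set set \<Rightarrow> bool" where
  "smooth_fan \<Sigma> \<longleftrightarrow> finite \<Sigma> \<and> \<Sigma> \<noteq> {} \<and>
     (\<forall>\<sigma>\<in>\<Sigma>. \<forall>\<tau>. \<tau> \<subseteq> \<sigma> \<longrightarrow> \<tau> \<in> \<Sigma>) \<and>
     (\<forall>\<sigma>\<in>\<Sigma>. \<forall>\<tau>\<in>\<Sigma>. \<forall>x. in_cone \<sigma> x \<and> in_cone \<tau> x \<longrightarrow> in_cone (\<sigma> \<inter> \<tau>) x) \<and>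
     (\<forall>\<sigma>\<in>\<Sigma>. \<exists>B. zbasis B \<and> \<sigma> \<subseteq> B)"

definition complete_fan :: "('n::finite) lat set set \<Rightarrow> bool" where
  "complete_fan \<Sigma> \<longleftrightarrow> (\<forall>x. \<exists>\<sigma>\<in>\<Sigma>. in_cone \<sigma> x)"

text \<open>Projective: there is a strictly convex support function (an ample divisor):
  for every maximal cone \<sigma> some m_\<sigma> in M agrees with a on the rays of \<sigma> and is strictly
  larger than a on all other rays.\<close>
definition projective_fan :: "('n::finite) lat set set \<Rightarrow> bool" where
  "projective_fan \<Sigma> \<longleftrightarrow> (\<exists>a :: ('n::finite) lat \<Rightarrow> int. \<forall>\<sigma>. max_cone \<Sigma> \<sigma> \<longrightarrow>
      (\<exists>m\<in>charlat. (\<forall>v\<in>\<sigma>. m v = a v) \<and> (\<forall>v\<in>rays \<Sigma> - \<sigma>. m v > a v)))"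

definition smooth_projective_toric :: "('n::finite) lat set set \<Rightarrow> bool" where
  "smooth_projective_toric \<Sigma> \<longleftrightarrow> smooth_fan \<Sigma> \<and> complete_fan \<Sigma> \<and> projective_fan \<Sigma>"

definition TDiv :: "('n::finite) lat set set \<Rightarrow> (('n::finite) lat \<Rightarrow> int) monoid" where
  "TDiv \<Sigma> = \<lparr>carrier = {D. \<forall>v. v \<notin> rays \<Sigma> \<longrightarrow> D v = 0},
              monoid.mult = (\<lambda>D E. \<lambda>v. D v + E v), monoid.one = (\<lambda>v. 0)\<rparr>"

text \<open>Principal divisors: image of M \<rightarrow> TDiv(X), m \<mapsto> div(\<chi>^m) = \<Sum> <m,u_\<rho>> D_\<rho>.\<close>
definition divm :: "('n::finite) lat set set \<Rightarrow> (('n::finite) lat \<Rightarrow> int) \<Rightarrow> (('n::finite) lat \<Rightarrow> int)" where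
  "divm \<Sigma> m = (\<lambda>v. if v \<in> rays \<Sigma> then m v else 0)"

definition Princ :: "('n::finite) lat set set \<Rightarrow> (('n::finite) lat \<Rightarrow> int) set" where
  "Princ \<Sigma> = divm \<Sigma> ` charlat"

definition Pic :: "('n::finite) lat set set \<Rightarrow> (('n::finite) lat \<Rightarrow> int) set monoid" where
  "Pic \<Sigma> = TDiv \<Sigma> Mod Princ \<Sigma>"

definition cls :: "('n::finite) lat set set \<Rightarrow> (('n::finite) lat \<Rightarrow> int) \<Rightarrow> (('n::finite) lat \<Rightarrow> int) set" where
  "cls \<Sigma> D = Princ \<Sigma> #>\<^bsub>TDiv \<Sigma>\<^esub> D"

definition AutSigma :: "('n::finite) lat set set \<Rightarrow> (('n::finite) lat \<Rightarrow> ('n::finite) lat) set" where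
  "AutSigma \<Sigma> = {g. bij g \<and> additive_map g \<and> (\<lambda>\<sigma>. g ` \<sigma>) ` \<Sigma> = \<Sigma>}"

text \<open>Induced actions: on M and on TDiv both by precomposition with g^{-1}
  (so g sends D_\<rho> to D_{g \<rho>}); on Pic(X) on classes.\<close>
definition act :: "(('n::finite) lat \<Rightarrow> ('n::finite) lat) \<Rightarrow> (('n::finite) lat \<Rightarrow> int) \<Rightarrow> (('n::finite) lat \<Rightarrow> int)" where
  "act g D = D \<circ> Hilbert_Choice.inv g"

definition picact :: "('n::finite) lat set set \<Rightarrow> (('n::finite) lat \<Rightarrow> ('n::finite) lat)
    \<Rightarrow> (('n::finite) lat \<Rightarrow> int) set \<Rightarrow> (('n::finite) lat \<Rightarrow> int) set" where
  "picact \<Sigma> g = (\<lambda>C \<in> carrier (Pic \<Sigma>). act g ` C)"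

text \<open>AutP(X) as the image of Aut(\<Sigma>) \<rightarrow> Aut(Pic(X)) (as stated in the context).\<close>
definition AutP :: "('n::finite) lat set set \<Rightarrow> ((('n::finite) lat \<Rightarrow> int) set \<Rightarrow> (('n::finite) lat \<Rightarrow> int) set) set" where
  "AutP \<Sigma> = picact \<Sigma> ` AutSigma \<Sigma>"

definition Wgrp :: "('n::finite) lat set set \<Rightarrow> ((('n::finite) lat \<Rightarrow> int) set \<Rightarrow> (('n::finite) lat \<Rightarrow> int) set) set
    \<Rightarrow> (('n::finite) lat \<Rightarrow> ('n::finite) lat) set" where
  "Wgrp \<Sigma> J = {g \<in> AutSigma \<Sigma>. picact \<Sigma> g \<in> J}"

definition Z1 :: "(('n::finite) lat \<Rightarrow> ('n::finite) lat) set \<Rightarrow> ((('n::finite) lat \<Rightarrow> ('n::finite) lat) \<Rightarrow> (('n::finite) lat \<Rightarrow> int)) set" where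
  "Z1 W = {f \<in> W \<rightarrow>\<^sub>E charlat. \<forall>g\<in>W. \<forall>h\<in>W. f (g \<circ> h) = (\<lambda>v. f g v + act g (f h) v)}"

definition B1 :: "(('n::finite) lat \<Rightarrow> ('n::finite) lat) set \<Rightarrow> ((('n::finite) lat \<Rightarrow> ('n::finite) lat) \<Rightarrow> (('n::finite) lat \<Rightarrow> int)) set" where
  "B1 W = {(\<lambda>g\<in>W. \<lambda>v. act g m v - m v) | m. m \<in> charlat}"

definition Z1grp :: "(('n::finite) lat \<Rightarrow> ('n::finite) lat) set \<Rightarrow> ((('n::finite) lat \<Rightarrow> ('n::finite) lat) \<Rightarrow> (('n::finite) lat \<Rightarrow> int)) monoid" where
  "Z1grp W = \<lparr>carrier = Z1 W, monoid.mult = (\<lambda>f f'. \<lambda>g\<in>W. \<lambda>v. f g v + f' g v), monoid.one = (\<lambda>g\<in>W. \<lambda>v. 0)\<rparr>"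

definition H1 :: "(('n::finite) lat \<Rightarrow> ('n::finite) lat) set \<Rightarrow> ((('n::finite) lat \<Rightarrow> ('n::finite) lat) \<Rightarrow> (('n::finite) lat \<Rightarrow> int)) set monoid" where
  "H1 W = Z1grp W Mod B1 W"

definition PicInv :: "('n::finite) lat set set \<Rightarrow> ((('n::finite) lat \<Rightarrow> int) set \<Rightarrow> (('n::finite) lat \<Rightarrow> int) set) set
    \<Rightarrow> (('n::finite) lat \<Rightarrow> int) set set" where
  "PicInv \<Sigma> J = {C \<in> carrier (Pic \<Sigma>). \<forall>j\<in>J. j C = C}"

definition TDivInv :: "('n::finite) lat set set \<Rightarrow> (('n::finite) lat \<Rightarrow> ('n::finite) lat) set \<Rightarrow> (('n::finite) lat \<Rightarrow> int) set" where
  "TDivInv \<Sigma> W = {D \<in> carrier (TDiv \<Sigma>). \<forall>g\<in>W. act g D = D}"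

definition PicInvGrp :: "('n::finite) lat set set \<Rightarrow> ((('n::finite) lat \<Rightarrow> int) set \<Rightarrow> (('n::finite) lat \<Rightarrow> int) set) set
    \<Rightarrow> (('n::finite) lat \<Rightarrow> int) set monoid" where
  "PicInvGrp \<Sigma> J = Pic \<Sigma> \<lparr>carrier := PicInv \<Sigma> J\<rparr>"

definition Coker :: "('n::finite) lat set set \<Rightarrow> ((('n::finite) lat \<Rightarrow> int) set \<Rightarrow> (('n::finite) lat \<Rightarrow> int) set) set
    \<Rightarrow> (('n::finite) lat \<Rightarrow> int) set set monoid" where
  "Coker \<Sigma> J = PicInvGrp \<Sigma> J Mod (cls \<Sigma> ` TDivInv \<Sigma> (Wgrp \<Sigma> J))"

definition prime_div :: "('n::finite) lat \<Rightarrow> (('n::finite) lat \<Rightarrow> int)" where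
  "prime_div \<rho> = (\<lambda>v. if v = \<rho> then 1 else 0)"

definition ray_classes :: "('n::finite) lat set set \<Rightarrow> (('n::finite) lat \<Rightarrow> int) set set" where
  "ray_classes \<Sigma> = (\<lambda>\<rho>. cls \<Sigma> (prime_div \<rho>)) ` rays \<Sigma>"

definition mult_cls :: "('n::finite) lat set set \<Rightarrow> (('n::finite) lat \<Rightarrow> int) set \<Rightarrow> nat" where
  "mult_cls \<Sigma> c = card {\<rho> \<in> rays \<Sigma>. cls \<Sigma> (prime_div \<rho>) = c}"

definition orbit_sum :: "('n::finite) lat set set \<Rightarrow> ((('n::finite) lat \<Rightarrow> int) set \<Rightarrow> (('n::finite) lat \<Rightarrow> int) set) set
    \<Rightarrow> (('n::finite) lat \<Rightarrow> int) set \<Rightarrow> (('n::finite) lat \<Rightarrow> int) set" where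
  "orbit_sum \<Sigma> J c = finprod (Pic \<Sigma>) id {j c | j. j \<in> J}"

definition PicT :: "('n::finite) lat set set \<Rightarrow> ((('n::finite) lat \<Rightarrow> int) set \<Rightarrow> (('n::finite) lat \<Rightarrow> int) set) set
    \<Rightarrow> (('n::finite) lat \<Rightarrow> int) set set" where
  "PicT \<Sigma> J = generate (Pic \<Sigma>)
      {orbit_sum \<Sigma> J c [^]\<^bsub>Pic \<Sigma>\<^esub> mult_cls \<Sigma> c | c. c \<in> ray_classes \<Sigma>}"

definition AmT :: "('n::finite) lat set set \<Rightarrow> ((('n::finite) lat \<Rightarrow> int) set \<Rightarrow> (('n::finite) lat \<Rightarrow> int) set) set
    \<Rightarrow> (('n::finite) lat \<Rightarrow> int) set set monoid" where
  "AmT \<Sigma> J = PicInvGrp \<Sigma> J Mod PicT \<Sigma> J"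

end

(*
  The exact sequence 0 -> M -> TDiv(X) -> Pic(X) -> 0 of W-modules gives the first isomorphism,
  because Pic(X)^J = Pic(X)^W (J is the image of W) and H^1(W, TDiv(X)) = 0: W permutes the basis
  D_rho of TDiv(X), and a cocycle vanishes on stabilisers since every automorphism of the fan has
  finite order. So every cocycle f : W -> M is the coboundary of a divisor D, and f |-> [D]
  induces H^1(W, M) ~= coker(TDiv(X)^W -> Pic(X)^J).

  For the second isomorphism, TDiv(X)^W is spanned by the sums of the D_rho over W-orbits of rays.
  Two rays with linearly equivalent divisors are swapped by a reflection of N lying in W, so the
  W-orbit of rho consists of the rays whose class lies in the J-orbit of [D_rho], each such class
  being hit n_i times. Hence the orbit sum has class n_i <D_i>_J, and the image of TDiv(X)^W in
  Pic(X) is Pic^T(X, J).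
*)

theory Submission
  imports Defs
begin

(* Hilbert_Choice.inv under another name: HOL-Algebra's syntax claims plain inv. *)
abbreviation fun_inv :: "('a \<Rightarrow> 'b) \<Rightarrow> 'b \<Rightarrow> 'a" where
  "fun_inv \<equiv> Hilbert_Choice.inv"

lemma additive_map_iff_additive:
  fixes f :: "'a::ab_group_add \<Rightarrow> 'b::ab_group_add"
  shows "additive_map f \<longleftrightarrow> additive f"
  by (simp add: additive_map_def additive_def)

lemma additive_map_comp: "additive_map g \<Longrightarrow> additive_map h \<Longrightarrow> additive_map (g \<circ> h)"
  by (simp add: additive_map_def)

lemma additive_map_inv:
  fixes g :: "'a::ab_group_add \<Rightarrow> 'a"
  assumes "additive_map g" "bij g"
  shows "additive_map (fun_inv g)"
  unfolding additive_map_def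
proof (intro allI)
  fix x y
  have "g (fun_inv g x + fun_inv g y) = x + y"
    using assms by (simp add: additive_map_def bij_is_surj surj_f_inv_f)
  then show "fun_inv g (x + y) = fun_inv g x + fun_inv g y"
    using assms(2) by (metis bij_inv_eq_iff)
qed

lemma additive_scale:
  fixes f :: "int ^ 'n::finite \<Rightarrow> int"
  assumes "additive f"
  shows "f (k *s x) = k * f x"
proof (induction k rule: int_induct[where k = 0])
  case base
  show ?case by (simp add: additive.zero[OF assms] zero_vec_def[symmetric] vector_scalar_mult_def)
next
  case (step1 i)
  have "(i + 1) *s x = i *s x + x" by (simp add: vec_eq_iff algebra_simps)
  with step1 show ?case by (simp add: additive.add[OF assms] algebra_simps)
next
  case (step2 i)
  have "i *s x = (i - 1) *s x + x" by (simp add: vec_eq_iff algebra_simps)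
  then have "f (i *s x) = f ((i - 1) *s x) + f x" by (simp only: additive.add[OF assms])
  with step2(2) show ?case by (simp add: left_diff_distrib)
qed

lemma additive_basis_expansion:
  fixes f :: "int ^ 'n::finite \<Rightarrow> int"
  assumes "additive f"
  shows "f x = (\<Sum>i\<in>UNIV. x $ i * f (axis i 1))"
proof -
  have "f x = f (\<Sum>i\<in>UNIV. x $ i *s axis i 1)" by (simp only: basis_expansion)
  then show ?thesis by (simp add: additive.sum[OF assms] additive_scale[OF assms])
qed

definition real_extension :: "(int ^ 'n::finite \<Rightarrow> int) \<Rightarrow> real ^ 'n \<Rightarrow> real" where
  "real_extension f y = (\<Sum>i\<in>UNIV. y $ i * real_of_int (f (axis i 1)))"

lemma real_extension_combination:
  fixes f :: "int ^ 'n::finite \<Rightarrow> int"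
  assumes "additive f" "finite S" "\<And>i. y $ i = (\<Sum>v\<in>S. a v * real_of_int (v $ i))"
  shows "real_extension f y = (\<Sum>v\<in>S. a v * real_of_int (f v))"
proof -
  have "real_extension f y = (\<Sum>v\<in>S. \<Sum>i\<in>UNIV. a v * (real_of_int (v $ i) * real_of_int (f (axis i 1))))"
    unfolding real_extension_def assms(3) sum_distrib_right
    by (subst sum.swap) (simp add: mult.assoc)
  also have "\<dots> = (\<Sum>v\<in>S. a v * real_of_int (f v))"
    by (subst (2) additive_basis_expansion[OF assms(1)]) (simp add: sum_distrib_left)
  finally show ?thesis .
qed

lemma real_extension_of_int:
  fixes f :: "int ^ 'n::finite \<Rightarrow> int"
  assumes "additive f"
  shows "real_extension f (\<chi> i. real_of_int (x $ i)) = real_of_int (f x)"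
  using real_extension_combination[OF assms, of "{x}" _ "\<lambda>_. 1"] by simp

definition zcoord :: "(int ^ 'n::finite) set \<Rightarrow> int ^ 'n \<Rightarrow> int ^ 'n \<Rightarrow> int" where
  "zcoord B x = (THE c. (\<forall>v. v \<notin> B \<longrightarrow> c v = 0) \<and> (\<forall>i. x $ i = (\<Sum>v\<in>B. c v * v $ i)))"

lemma zcoord_unique:
  assumes "zbasis B" "\<forall>v. v \<notin> B \<longrightarrow> c v = 0" "\<forall>i. x $ i = (\<Sum>v\<in>B. c v * v $ i)"
  shows "zcoord B x = c"
proof -
  have "\<exists>!c. (\<forall>v. v \<notin> B \<longrightarrow> c v = 0) \<and> (\<forall>i. x $ i = (\<Sum>v\<in>B. c v * v $ i))"
    using assms(1) by (simp add: zbasis_def)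
  then show ?thesis unfolding zcoord_def by (rule the1_equality) (simp add: assms(2,3))
qed

lemma zcoord_expansion:
  assumes "zbasis B"
  shows "\<forall>v. v \<notin> B \<longrightarrow> zcoord B x v = 0" "\<forall>i. x $ i = (\<Sum>v\<in>B. zcoord B x v * v $ i)"
proof -
  have "\<exists>!c. (\<forall>v. v \<notin> B \<longrightarrow> c v = 0) \<and> (\<forall>i. x $ i = (\<Sum>v\<in>B. c v * v $ i))"
    using assms by (simp add: zbasis_def)
  from theI'[OF this] show "\<forall>v. v \<notin> B \<longrightarrow> zcoord B x v = 0" "\<forall>i. x $ i = (\<Sum>v\<in>B. zcoord B x v * v $ i)"
    unfolding zcoord_def by blast+
qed

lemma additive_zcoord:
  assumes "zbasis B"
  shows "additive (\<lambda>x. zcoord B x w)"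
proof
  fix x y
  have "zcoord B (x + y) = (\<lambda>v. zcoord B x v + zcoord B y v)"
    using zcoord_expansion[OF assms, of x] zcoord_expansion[OF assms, of y]
    by (intro zcoord_unique[OF assms]) (simp_all add: distrib_right sum.distrib)
  then show "zcoord B (x + y) w = zcoord B x w + zcoord B y w" by simp
qed

lemma zcoord_basis_vector:
  assumes "zbasis B" "v \<in> B"
  shows "zcoord B v w = (if w = v then 1 else 0)"
proof -
  have "finite B" using assms(1) by (simp add: zbasis_def)
  have "(\<Sum>u\<in>B. (if u = v then 1 else 0) * u $ i) = v $ i" for i
    using \<open>finite B\<close> assms(2) by (simp add: if_distrib[of "\<lambda>c. c * _"] sum.delta' cong: if_cong)
  then have "zcoord B v = (\<lambda>u. if u = v then 1 else 0)"
    using assms by (intro zcoord_unique) auto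
  then show ?thesis by simp
qed

lemma sum_mult_of_bool_point:
  fixes f :: "'a \<Rightarrow> 'b::semiring_1"
  assumes "finite A"
  shows "(\<Sum>x\<in>A. f x * of_bool (x = a)) = (if a \<in> A then f a else 0)"
proof -
  have "(\<Sum>x\<in>A. f x * of_bool (x = a)) = (\<Sum>x\<in>A. if x = a then f x else 0)" by (rule sum.cong) auto
  also have "\<dots> = (if a \<in> A then f a else 0)" using assms by (rule sum.delta)
  finally show ?thesis .
qed

lemma in_cone_minus_generator:
  assumes "finite \<sigma>" "w \<in> \<sigma>" "\<forall>v\<in>\<sigma>. 0 \<le> a v" "1 \<le> a w"
    and "\<And>i. x $ i = (\<Sum>v\<in>\<sigma>. a v * real_of_int (v $ i))"
  shows "in_cone \<sigma> (\<chi> i. x $ i - real_of_int (w $ i))"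
  unfolding in_cone_def
proof (intro exI[of _ "\<lambda>v. a v - of_bool (v = w)"] conjI allI ballI)
  show "0 \<le> a v - of_bool (v = w)" if "v \<in> \<sigma>" for v using assms(3,4) that by auto
  fix i
  have "(\<Sum>v\<in>\<sigma>. of_bool (v = w) * real_of_int (v $ i)) = (\<Sum>v\<in>\<sigma>. if v = w then real_of_int (v $ i) else 0)"
    by (intro sum.cong) auto
  then show "(\<chi> i. x $ i - real_of_int (w $ i)) $ i = (\<Sum>v\<in>\<sigma>. (a v - of_bool (v = w)) * real_of_int (v $ i))"
    using assms(1,2) by (simp add: assms(5) left_diff_distrib sum_subtractf sum.delta')
qed

definition reflection :: "(int ^ 'n::finite \<Rightarrow> int) \<Rightarrow> int ^ 'n \<Rightarrow> int ^ 'n \<Rightarrow> int ^ 'n" where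
  "reflection m d x = x - m x *s d"

lemma additive_map_reflection: "additive m \<Longrightarrow> additive_map (reflection m d)"
  by (simp add: additive_map_def reflection_def additive.add vec_eq_iff algebra_simps)

lemma reflection_reflection:
  assumes "additive m" "m d = 2"
  shows "reflection m d (reflection m d x) = x"
proof -
  have "m (reflection m d x) = - m x"
    using assms by (simp add: reflection_def additive.diff additive_scale)
  then show ?thesis by (simp add: reflection_def vec_eq_iff algebra_simps)
qed

section \<open>Divisor class groups\<close>

lemma charlat_iff_additive: "m \<in> charlat \<longleftrightarrow> additive m"
  by (simp add: charlat_def additive_map_iff_additive)

lemma charlat_add: "m \<in> charlat \<Longrightarrow> m' \<in> charlat \<Longrightarrow> (\<lambda>x. m x + m' x) \<in> charlat"
  and charlat_diff: "m \<in> charlat \<Longrightarrow> m' \<in> charlat \<Longrightarrow> (\<lambda>x. m x - m' x) \<in> charlat"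
  and charlat_scale: "m \<in> charlat \<Longrightarrow> (\<lambda>x. k * m x) \<in> charlat"
  and charlat_zero: "(\<lambda>x. 0) \<in> charlat"
  by (simp_all add: charlat_def additive_map_def algebra_simps)

lemma TDiv_carrier: "D \<in> carrier (TDiv \<Sigma>) \<longleftrightarrow> (\<forall>v. v \<notin> rays \<Sigma> \<longrightarrow> D v = 0)"
  and TDiv_mult: "D \<otimes>\<^bsub>TDiv \<Sigma>\<^esub> E = (\<lambda>v. D v + E v)"
  and TDiv_one: "\<one>\<^bsub>TDiv \<Sigma>\<^esub> = (\<lambda>v. 0)"
  by (simp_all add: TDiv_def)

lemma comm_group_TDiv: "comm_group (TDiv \<Sigma>)"
proof (rule comm_groupI)
  fix D assume "D \<in> carrier (TDiv \<Sigma>)"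
  then show "\<exists>E\<in>carrier (TDiv \<Sigma>). E \<otimes>\<^bsub>TDiv \<Sigma>\<^esub> D = \<one>\<^bsub>TDiv \<Sigma>\<^esub>"
    by (intro bexI[of _ "\<lambda>v. - D v"]) (simp_all add: TDiv_def)
qed (simp_all add: TDiv_def add_ac)

interpretation TDiv: comm_group "TDiv \<Sigma>" for \<Sigma>
  by (rule comm_group_TDiv)

lemma TDiv_inv: "D \<in> carrier (TDiv \<Sigma>) \<Longrightarrow> inv\<^bsub>TDiv \<Sigma>\<^esub> D = (\<lambda>v. - D v)"
  by (rule TDiv.inv_equality) (simp_all add: TDiv_def)

lemma TDiv_int_pow:
  assumes "D \<in> carrier (TDiv \<Sigma>)"
  shows "D [^]\<^bsub>TDiv \<Sigma>\<^esub> k = (\<lambda>v. k * D v)"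
proof (induction k rule: int_induct[where k = 0])
  case base
  show ?case by (simp add: TDiv_one)
next
  case (step1 i)
  then show ?case using assms by (simp add: TDiv.int_pow_mult TDiv_mult algebra_simps)
next
  case (step2 i)
  have "D [^]\<^bsub>TDiv \<Sigma>\<^esub> i = D [^]\<^bsub>TDiv \<Sigma>\<^esub> (i - 1) \<otimes>\<^bsub>TDiv \<Sigma>\<^esub> D"
    using TDiv.int_pow_mult[OF assms, of "i - 1" 1] TDiv.int_pow_1[OF assms] by simp
  with step2 show ?case by (simp add: TDiv_mult fun_eq_iff algebra_simps)
qed

lemma divm_carrier: "divm \<Sigma> m \<in> carrier (TDiv \<Sigma>)"
  by (simp add: TDiv_carrier divm_def)

lemma subgroup_Princ: "subgroup (Princ \<Sigma>) (TDiv \<Sigma>)"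
proof (rule TDiv.subgroupI)
  show "Princ \<Sigma> \<subseteq> carrier (TDiv \<Sigma>)" "Princ \<Sigma> \<noteq> {}"
    using divm_carrier charlat_zero by (auto simp: Princ_def)
next
  fix D assume "D \<in> Princ \<Sigma>"
  then obtain m where m: "m \<in> charlat" "D = divm \<Sigma> m" by (auto simp: Princ_def)
  then have "inv\<^bsub>TDiv \<Sigma>\<^esub> D = divm \<Sigma> (\<lambda>x. (-1) * m x)"
    by (simp add: TDiv_inv divm_carrier) (simp add: divm_def fun_eq_iff)
  then show "inv\<^bsub>TDiv \<Sigma>\<^esub> D \<in> Princ \<Sigma>" using charlat_scale[OF m(1), of "-1"] by (simp add: Princ_def)
next
  fix D E assume "D \<in> Princ \<Sigma>" "E \<in> Princ \<Sigma>"
  then obtain m m' where m: "m \<in> charlat" "m' \<in> charlat" "D = divm \<Sigma> m" "E = divm \<Sigma> m'"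
    by (auto simp: Princ_def)
  then have "D \<otimes>\<^bsub>TDiv \<Sigma>\<^esub> E = divm \<Sigma> (\<lambda>x. m x + m' x)"
    by (simp add: TDiv_mult divm_def fun_eq_iff)
  then show "D \<otimes>\<^bsub>TDiv \<Sigma>\<^esub> E \<in> Princ \<Sigma>" using charlat_add[OF m(1,2)] by (simp add: Princ_def)
qed

lemma comm_group_Pic: "comm_group (Pic \<Sigma>)"
  unfolding Pic_def by (rule TDiv.abelian_FactGroup[OF subgroup_Princ])

interpretation Pic: comm_group "Pic \<Sigma>" for \<Sigma>
  by (rule comm_group_Pic)

lemma cls_hom: "cls \<Sigma> \<in> hom (TDiv \<Sigma>) (Pic \<Sigma>)"
proof -
  have "cls \<Sigma> = (#>\<^bsub>TDiv \<Sigma>\<^esub>) (Princ \<Sigma>)" by (simp add: fun_eq_iff cls_def)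
  then show ?thesis
    unfolding Pic_def by (metis normal.r_coset_hom_Mod TDiv.subgroup_imp_normal subgroup_Princ)
qed

lemma Pic_carrier: "carrier (Pic \<Sigma>) = cls \<Sigma> ` carrier (TDiv \<Sigma>)"
  unfolding Pic_def cls_def by (rule carrier_FactGroup)

lemma cls_carrier: "D \<in> carrier (TDiv \<Sigma>) \<Longrightarrow> cls \<Sigma> D \<in> carrier (Pic \<Sigma>)"
  by (simp add: Pic_carrier)

lemma cls_add:
  "D \<in> carrier (TDiv \<Sigma>) \<Longrightarrow> E \<in> carrier (TDiv \<Sigma>) \<Longrightarrow>
    cls \<Sigma> (\<lambda>v. D v + E v) = cls \<Sigma> D \<otimes>\<^bsub>Pic \<Sigma>\<^esub> cls \<Sigma> E"
  using hom_mult[OF cls_hom] by (simp add: TDiv_mult)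

lemma cls_zero: "cls \<Sigma> (\<lambda>v. 0) = \<one>\<^bsub>Pic \<Sigma>\<^esub>"
  using hom_one[OF cls_hom] TDiv.is_group Pic.is_group by (simp add: TDiv_one)

lemma cls_scale:
  assumes "D \<in> carrier (TDiv \<Sigma>)"
  shows "cls \<Sigma> (\<lambda>v. k * D v) = cls \<Sigma> D [^]\<^bsub>Pic \<Sigma>\<^esub> k"
  using hom_int_pow[OF cls_hom assms TDiv.is_group Pic.is_group, of k]
  by (simp add: TDiv_int_pow[OF assms])

lemma cls_add_scale:
  assumes "D \<in> carrier (TDiv \<Sigma>)" "E \<in> carrier (TDiv \<Sigma>)"
  shows "cls \<Sigma> (\<lambda>v. D v + k * E v) = cls \<Sigma> D \<otimes>\<^bsub>Pic \<Sigma>\<^esub> cls \<Sigma> E [^]\<^bsub>Pic \<Sigma>\<^esub> k"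
proof -
  have "(\<lambda>v. k * E v) \<in> carrier (TDiv \<Sigma>)" using assms(2) by (simp add: TDiv_carrier)
  then show ?thesis using assms by (simp add: cls_add cls_scale)
qed

lemma cls_eq_image: "cls \<Sigma> D = (\<lambda>m v. divm \<Sigma> m v + D v) ` charlat"
  by (auto simp: cls_def r_coset_def Princ_def TDiv_mult)

lemma cls_eq_iff:
  assumes "D \<in> carrier (TDiv \<Sigma>)" "E \<in> carrier (TDiv \<Sigma>)"
  shows "cls \<Sigma> D = cls \<Sigma> E \<longleftrightarrow> (\<exists>m\<in>charlat. D = (\<lambda>v. divm \<Sigma> m v + E v))"
proof -
  have "cls \<Sigma> D = cls \<Sigma> E \<longleftrightarrow> D \<in> cls \<Sigma> E"
    using TDiv.repr_independence[OF _ assms(2) subgroup_Princ] TDiv.rcos_self[OF assms(1) subgroup_Princ]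
    unfolding cls_def by metis
  then show ?thesis by (auto simp: cls_eq_image)
qed

lemma cls_divm: "m \<in> charlat \<Longrightarrow> cls \<Sigma> (divm \<Sigma> m) = \<one>\<^bsub>Pic \<Sigma>\<^esub>"
  using cls_eq_iff[OF divm_carrier, of "\<lambda>v. 0"] by (auto simp: TDiv_carrier cls_zero)

lemma group_hom_cls: "group_hom (TDiv \<Sigma>) (Pic \<Sigma>) (cls \<Sigma>)"
  by (simp add: group_hom_def group_hom_axioms_def cls_hom TDiv.is_group Pic.is_group)

abbreviation ray_class :: "(int ^ 'n::finite) set set \<Rightarrow> int ^ 'n \<Rightarrow> (int ^ 'n \<Rightarrow> int) set" where
  "ray_class \<Sigma> \<rho> \<equiv> cls \<Sigma> (prime_div \<rho>)"

definition sum_prime_div :: "(int ^ 'n::finite) set \<Rightarrow> int ^ 'n \<Rightarrow> int" where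
  "sum_prime_div A v = of_bool (v \<in> A)"

lemma prime_div_carrier: "\<rho> \<in> rays \<Sigma> \<Longrightarrow> prime_div \<rho> \<in> carrier (TDiv \<Sigma>)"
  by (simp add: TDiv_carrier prime_div_def)

lemma ray_class_carrier: "\<rho> \<in> rays \<Sigma> \<Longrightarrow> ray_class \<Sigma> \<rho> \<in> carrier (Pic \<Sigma>)"
  by (simp add: cls_carrier prime_div_carrier)

lemma cls_sum_prime_div:
  assumes "finite A" "A \<subseteq> rays \<Sigma>"
  shows "cls \<Sigma> (sum_prime_div A) = finprod (Pic \<Sigma>) (ray_class \<Sigma>) A"
  using assms
proof (induction A rule: finite_induct)
  case empty
  then show ?case by (simp add: sum_prime_div_def cls_zero)
next
  case (insert \<rho> A)
  have "sum_prime_div (insert \<rho> A) = (\<lambda>v. prime_div \<rho> v + sum_prime_div A v)"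
    using insert.hyps(2) by (auto simp: sum_prime_div_def prime_div_def fun_eq_iff)
  moreover have "sum_prime_div A \<in> carrier (TDiv \<Sigma>)"
    using insert.prems by (auto simp: sum_prime_div_def TDiv_carrier)
  moreover have "ray_class \<Sigma> \<in> A \<rightarrow> carrier (Pic \<Sigma>)" "ray_class \<Sigma> \<rho> \<in> carrier (Pic \<Sigma>)"
    using insert.prems ray_class_carrier by auto
  ultimately show ?case
    using insert.IH insert.hyps insert.prems by (simp add: cls_add prime_div_carrier Pic.finprod_insert)
qed

lemma finprod_ray_class_fiber:
  assumes "c \<in> carrier (Pic \<Sigma>)"
  shows "finprod (Pic \<Sigma>) (ray_class \<Sigma>) {\<rho> \<in> rays \<Sigma>. ray_class \<Sigma> \<rho> = c} = c [^]\<^bsub>Pic \<Sigma>\<^esub> mult_cls \<Sigma> c"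
proof -
  have "finprod (Pic \<Sigma>) (ray_class \<Sigma>) {\<rho> \<in> rays \<Sigma>. ray_class \<Sigma> \<rho> = c}
      = finprod (Pic \<Sigma>) (\<lambda>_. c) {\<rho> \<in> rays \<Sigma>. ray_class \<Sigma> \<rho> = c}"
    by (rule Pic.finprod_cong'[OF refl]) (simp_all add: Pi_iff assms)
  then show ?thesis by (simp add: Pic.finprod_const[OF assms] mult_cls_def)
qed

lemma (in comm_monoid) finprod_nat_pow:
  assumes "f \<in> A \<rightarrow> carrier G"
  shows "finprod G (\<lambda>a. f a [^] (n::nat)) A = finprod G f A [^] n"
  using assms
proof (induction A rule: infinite_finite_induct)
  case (insert a A)
  then have "f \<in> A \<rightarrow> carrier G" "f a \<in> carrier G" by auto
  with insert show ?case by (simp add: finprod_insert Pi_iff nat_pow_distrib finprod_closed)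
qed simp_all

section \<open>Automorphisms of the fan and their action\<close>

lemma aut_bij: "g \<in> AutSigma \<Sigma> \<Longrightarrow> bij g"
  and aut_additive: "g \<in> AutSigma \<Sigma> \<Longrightarrow> additive g"
  and aut_cones: "g \<in> AutSigma \<Sigma> \<Longrightarrow> (\<lambda>\<sigma>. g ` \<sigma>) ` \<Sigma> = \<Sigma>"
  by (simp_all add: AutSigma_def additive_map_iff_additive)

lemma aut_image_rays:
  assumes "g \<in> AutSigma \<Sigma>"
  shows "g ` rays \<Sigma> = rays \<Sigma>"
proof -
  have "g ` rays \<Sigma> = \<Union> ((\<lambda>\<sigma>. g ` \<sigma>) ` \<Sigma>)" by (auto simp: rays_def)
  then show ?thesis by (simp add: aut_cones[OF assms] rays_def)
qed

lemma aut_mem_rays_iff: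
  assumes "g \<in> AutSigma \<Sigma>"
  shows "g v \<in> rays \<Sigma> \<longleftrightarrow> v \<in> rays \<Sigma>"
  using inj_image_mem_iff[OF bij_is_inj[OF aut_bij[OF assms]], of v "rays \<Sigma>"]
  by (simp add: aut_image_rays[OF assms])

lemma aut_id: "id \<in> AutSigma \<Sigma>"
  by (simp add: AutSigma_def additive_map_def)

lemma aut_comp:
  assumes "g \<in> AutSigma \<Sigma>" "h \<in> AutSigma \<Sigma>"
  shows "g \<circ> h \<in> AutSigma \<Sigma>"
  unfolding AutSigma_def mem_Collect_eq
proof (intro conjI)
  show "bij (g \<circ> h)" using aut_bij[OF assms(1)] aut_bij[OF assms(2)] by (rule bij_comp[rotated])
  show "additive_map (g \<circ> h)"
    using assms unfolding AutSigma_def by (blast intro: additive_map_comp)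
  have "(\<lambda>\<sigma>. (g \<circ> h) ` \<sigma>) ` \<Sigma> = (\<lambda>\<sigma>. g ` \<sigma>) ` (\<lambda>\<sigma>. h ` \<sigma>) ` \<Sigma>"
    by (simp add: image_image o_def)
  also have "\<dots> = \<Sigma>" by (simp only: aut_cones[OF assms(1)] aut_cones[OF assms(2)])
  finally show "(\<lambda>\<sigma>. (g \<circ> h) ` \<sigma>) ` \<Sigma> = \<Sigma>" .
qed

lemma aut_inv:
  assumes "g \<in> AutSigma \<Sigma>"
  shows "fun_inv g \<in> AutSigma \<Sigma>"
  unfolding AutSigma_def mem_Collect_eq
proof (intro conjI)
  show "bij (fun_inv g)" using aut_bij[OF assms] by (rule bij_imp_bij_inv)
  show "additive_map (fun_inv g)"
    using assms unfolding AutSigma_def by (blast intro: additive_map_inv)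
  have "(\<lambda>\<sigma>. fun_inv g ` \<sigma>) ` \<Sigma> = (\<lambda>\<sigma>. fun_inv g ` \<sigma>) ` (\<lambda>\<sigma>. g ` \<sigma>) ` \<Sigma>"
    by (simp only: aut_cones[OF assms])
  also have "\<dots> = \<Sigma>"
    using bij_is_inj[OF aut_bij[OF assms]] by (simp add: image_image inv_f_f)
  finally show "(\<lambda>\<sigma>. fun_inv g ` \<sigma>) ` \<Sigma> = \<Sigma>" .
qed

lemma act_apply: "act g D v = D (fun_inv g v)"
  by (simp add: act_def)

lemma act_id: "act id D = D"
  by (simp add: act_def)

lemma act_comp: "bij g \<Longrightarrow> bij h \<Longrightarrow> act (g \<circ> h) D = act g (act h D)"
  by (simp add: act_def o_inv_distrib o_assoc)

lemma act_act_inv: "bij g \<Longrightarrow> act g (act (fun_inv g) D) = D"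
  by (simp add: fun_eq_iff act_def inv_inv_eq bij_is_surj surj_f_inv_f)

lemma act_prime_div:
  assumes "bij g"
  shows "act g (prime_div \<rho>) = prime_div (g \<rho>)"
proof
  fix v
  have "fun_inv g v = \<rho> \<longleftrightarrow> v = g \<rho>" using assms by (metis bij_inv_eq_iff)
  then show "act g (prime_div \<rho>) v = prime_div (g \<rho>) v" by (simp add: act_def prime_div_def)
qed

lemma act_TDiv: "g \<in> AutSigma \<Sigma> \<Longrightarrow> D \<in> carrier (TDiv \<Sigma>) \<Longrightarrow> act g D \<in> carrier (TDiv \<Sigma>)"
  by (simp add: TDiv_carrier act_apply aut_mem_rays_iff[OF aut_inv])

lemma act_charlat: "g \<in> AutSigma \<Sigma> \<Longrightarrow> m \<in> charlat \<Longrightarrow> act g m \<in> charlat"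
  unfolding charlat_def act_def
  by (simp add: additive_map_comp additive_map_inv AutSigma_def)

lemma act_divm: "g \<in> AutSigma \<Sigma> \<Longrightarrow> act g (divm \<Sigma> m) = divm \<Sigma> (act g m)"
  by (simp add: fun_eq_iff act_apply divm_def aut_mem_rays_iff[OF aut_inv])

lemma act_image_charlat:
  assumes "g \<in> AutSigma \<Sigma>"
  shows "act g ` charlat = charlat"
proof
  show "act g ` charlat \<subseteq> charlat" using act_charlat[OF assms] by blast
  show "charlat \<subseteq> act g ` charlat"
    using act_charlat[OF aut_inv[OF assms]] act_act_inv[OF aut_bij[OF assms]] by (metis image_eqI subsetI)
qed

lemma act_cls:
  assumes "g \<in> AutSigma \<Sigma>"
  shows "act g ` cls \<Sigma> D = cls \<Sigma> (act g D)"
proof -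
  have "act g ` cls \<Sigma> D = (\<lambda>m v. divm \<Sigma> m v + act g D v) ` act g ` charlat"
    unfolding cls_eq_image image_image using act_divm[OF assms]
    by (intro image_cong) (simp_all add: fun_eq_iff act_apply)
  then show ?thesis by (simp add: act_image_charlat[OF assms] cls_eq_image)
qed

lemma picact_cls:
  "g \<in> AutSigma \<Sigma> \<Longrightarrow> D \<in> carrier (TDiv \<Sigma>) \<Longrightarrow> picact \<Sigma> g (cls \<Sigma> D) = cls \<Sigma> (act g D)"
  by (simp add: picact_def cls_carrier act_cls)

lemma picact_carrier:
  assumes "g \<in> AutSigma \<Sigma>" "C \<in> carrier (Pic \<Sigma>)"
  shows "picact \<Sigma> g C \<in> carrier (Pic \<Sigma>)"
  using assms(2) by (auto simp: Pic_carrier picact_cls[OF assms(1)] act_TDiv[OF assms(1)])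

lemma picact_comp_apply:
  assumes "g \<in> AutSigma \<Sigma>" "h \<in> AutSigma \<Sigma>" "C \<in> carrier (Pic \<Sigma>)"
  shows "picact \<Sigma> (g \<circ> h) C = picact \<Sigma> g (picact \<Sigma> h C)"
proof -
  obtain D where "D \<in> carrier (TDiv \<Sigma>)" "C = cls \<Sigma> D" using assms(3) by (auto simp: Pic_carrier)
  then show ?thesis
    using act_comp[OF aut_bij[OF assms(1)] aut_bij[OF assms(2)]]
    by (simp add: picact_cls assms aut_comp act_TDiv)
qed

lemma picact_id_apply: "C \<in> carrier (Pic \<Sigma>) \<Longrightarrow> picact \<Sigma> id C = C"
  by (simp add: picact_def act_def)

lemma picact_Bij:
  assumes "g \<in> AutSigma \<Sigma>"
  shows "picact \<Sigma> g \<in> Bij (carrier (Pic \<Sigma>))"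
proof -
  have "g \<circ> fun_inv g = id" "fun_inv g \<circ> g = id"
    using aut_bij[OF assms] by (simp_all add: fun_eq_iff bij_is_surj surj_f_inv_f bij_is_inj inv_f_f)
  then have inverse: "picact \<Sigma> (fun_inv g) (picact \<Sigma> g C) = C" "picact \<Sigma> g (picact \<Sigma> (fun_inv g) C) = C"
    if "C \<in> carrier (Pic \<Sigma>)" for C
    using that by (simp_all add: assms aut_inv picact_id_apply flip: picact_comp_apply)
  have "bij_betw (picact \<Sigma> g) (carrier (Pic \<Sigma>)) (carrier (Pic \<Sigma>))"
    by (rule bij_betw_byWitness[where f' = "picact \<Sigma> (fun_inv g)"])
      (use inverse picact_carrier[OF assms] picact_carrier[OF aut_inv[OF assms]] in auto)
  then show ?thesis by (simp add: Bij_def picact_def)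
qed

lemma picact_comp:
  assumes "g \<in> AutSigma \<Sigma>" "h \<in> AutSigma \<Sigma>"
  shows "picact \<Sigma> (g \<circ> h) = picact \<Sigma> g \<otimes>\<^bsub>BijGroup (carrier (Pic \<Sigma>))\<^esub> picact \<Sigma> h"
proof -
  have "picact \<Sigma> g \<otimes>\<^bsub>BijGroup (carrier (Pic \<Sigma>))\<^esub> picact \<Sigma> h
      = compose (carrier (Pic \<Sigma>)) (picact \<Sigma> g) (picact \<Sigma> h)"
    using picact_Bij[OF assms(1)] picact_Bij[OF assms(2)] by (simp add: BijGroup_def)
  also have "\<dots> = picact \<Sigma> (g \<circ> h)"
  proof (rule extensionalityI[OF compose_extensional])
    show "picact \<Sigma> (g \<circ> h) \<in> extensional (carrier (Pic \<Sigma>))" by (simp add: picact_def)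
  qed (simp add: compose_def picact_comp_apply[OF assms])
  finally show ?thesis ..
qed

lemma picact_id: "picact \<Sigma> id = \<one>\<^bsub>BijGroup (carrier (Pic \<Sigma>))\<^esub>"
  by (simp add: BijGroup_def picact_def act_def fun_eq_iff restrict_def)

lemma picact_mult:
  assumes "g \<in> AutSigma \<Sigma>" "C \<in> carrier (Pic \<Sigma>)" "C' \<in> carrier (Pic \<Sigma>)"
  shows "picact \<Sigma> g (C \<otimes>\<^bsub>Pic \<Sigma>\<^esub> C') = picact \<Sigma> g C \<otimes>\<^bsub>Pic \<Sigma>\<^esub> picact \<Sigma> g C'"
proof -
  obtain D D' where D: "D \<in> carrier (TDiv \<Sigma>)" "D' \<in> carrier (TDiv \<Sigma>)"
    and C: "C = cls \<Sigma> D" "C' = cls \<Sigma> D'"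
    using assms(2,3) by (auto simp: Pic_carrier)
  have sum: "(\<lambda>v. D v + D' v) \<in> carrier (TDiv \<Sigma>)" using D by (simp add: TDiv_carrier)
  have "picact \<Sigma> g (C \<otimes>\<^bsub>Pic \<Sigma>\<^esub> C') = cls \<Sigma> (act g (\<lambda>v. D v + D' v))"
    by (simp add: C cls_add[OF D, symmetric] picact_cls[OF assms(1) sum])
  also have "\<dots> = cls \<Sigma> (\<lambda>v. act g D v + act g D' v)" by (simp add: act_def o_def)
  also have "\<dots> = picact \<Sigma> g C \<otimes>\<^bsub>Pic \<Sigma>\<^esub> picact \<Sigma> g C'"
    by (simp add: C D cls_add act_TDiv[OF assms(1)] picact_cls[OF assms(1)])
  finally show ?thesis .
qed

lemma aut_funpow: "g \<in> AutSigma \<Sigma> \<Longrightarrow> g ^^ k \<in> AutSigma \<Sigma>"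
  by (induction k) (simp_all add: aut_id aut_comp)

lemma group_hom_picact: "g \<in> AutSigma \<Sigma> \<Longrightarrow> group_hom (Pic \<Sigma>) (Pic \<Sigma>) (picact \<Sigma> g)"
  by (simp add: group_hom_def group_hom_axioms_def Pic.is_group hom_def picact_carrier picact_mult)

lemma picact_ray_class:
  "g \<in> AutSigma \<Sigma> \<Longrightarrow> \<rho> \<in> rays \<Sigma> \<Longrightarrow> picact \<Sigma> g (ray_class \<Sigma> \<rho>) = ray_class \<Sigma> (g \<rho>)"
  by (simp add: picact_cls prime_div_carrier act_prime_div aut_bij)

lemma mult_cls_picact:
  assumes g: "g \<in> AutSigma \<Sigma>" and c: "c \<in> carrier (Pic \<Sigma>)"
  shows "mult_cls \<Sigma> (picact \<Sigma> g c) = mult_cls \<Sigma> c"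
proof -
  have "g ` {\<rho> \<in> rays \<Sigma>. ray_class \<Sigma> \<rho> = c} = {\<rho> \<in> rays \<Sigma>. ray_class \<Sigma> \<rho> = picact \<Sigma> g c}"
  proof (intro equalityI subsetI)
    fix \<rho>' assume "\<rho>' \<in> g ` {\<rho> \<in> rays \<Sigma>. ray_class \<Sigma> \<rho> = c}"
    then show "\<rho>' \<in> {\<rho> \<in> rays \<Sigma>. ray_class \<Sigma> \<rho> = picact \<Sigma> g c}"
      by (auto simp: aut_mem_rays_iff[OF g] picact_ray_class[OF g])
  next
    fix \<rho>' assume \<rho>': "\<rho>' \<in> {\<rho> \<in> rays \<Sigma>. ray_class \<Sigma> \<rho> = picact \<Sigma> g c}"
    let ?\<rho> = "fun_inv g \<rho>'"
    have \<rho>'_ray: "\<rho>' \<in> rays \<Sigma>" and \<rho>'_class: "ray_class \<Sigma> \<rho>' = picact \<Sigma> g c" using \<rho>' by auto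
    have "ray_class \<Sigma> ?\<rho> = picact \<Sigma> (fun_inv g) (picact \<Sigma> g c)"
      using picact_ray_class[OF aut_inv[OF g] \<rho>'_ray] \<rho>'_class by simp
    also have "\<dots> = picact \<Sigma> (fun_inv g \<circ> g) c" by (rule picact_comp_apply[OF aut_inv[OF g] g c, symmetric])
    also have "fun_inv g \<circ> g = id" using aut_bij[OF g] by (simp add: fun_eq_iff bij_is_inj inv_f_f)
    finally have "ray_class \<Sigma> ?\<rho> = c" using picact_id_apply[OF c] by (simp add: id_def)
    moreover have "?\<rho> \<in> rays \<Sigma>" "g ?\<rho> = \<rho>'"
      using \<rho>'_ray aut_mem_rays_iff[OF aut_inv[OF g]] aut_bij[OF g] by (auto simp: bij_is_surj surj_f_inv_f)
    ultimately show "\<rho>' \<in> g ` {\<rho> \<in> rays \<Sigma>. ray_class \<Sigma> \<rho> = c}"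
      by (intro rev_image_eqI[of ?\<rho>]) simp_all
  qed
  moreover have "card (g ` {\<rho> \<in> rays \<Sigma>. ray_class \<Sigma> \<rho> = c}) = card {\<rho> \<in> rays \<Sigma>. ray_class \<Sigma> \<rho> = c}"
    by (rule card_image[OF inj_on_subset[OF bij_is_inj[OF aut_bij[OF g]] subset_UNIV]])
  ultimately show ?thesis by (simp add: mult_cls_def)
qed

locale smooth_complete_fan =
  fixes \<Sigma> :: "(int ^ 'n::finite) set set"
  assumes smooth: "smooth_fan \<Sigma>" and complete: "complete_fan \<Sigma>"
begin

lemma face_in_fan: "\<sigma> \<in> \<Sigma> \<Longrightarrow> \<tau> \<subseteq> \<sigma> \<Longrightarrow> \<tau> \<in> \<Sigma>"
  using smooth by (auto simp: smooth_fan_def)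

lemma in_cone_Int:
  "\<sigma> \<in> \<Sigma> \<Longrightarrow> \<tau> \<in> \<Sigma> \<Longrightarrow> in_cone \<sigma> x \<Longrightarrow> in_cone \<tau> x \<Longrightarrow> in_cone (\<sigma> \<inter> \<tau>) x"
  using smooth by (auto simp: smooth_fan_def)

lemma cone_in_zbasis: "\<sigma> \<in> \<Sigma> \<Longrightarrow> \<exists>B. zbasis B \<and> \<sigma> \<subseteq> B"
  using smooth by (auto simp: smooth_fan_def)

lemma finite_cone: "\<sigma> \<in> \<Sigma> \<Longrightarrow> finite \<sigma>"
  using cone_in_zbasis by (meson finite_subset zbasis_def)

lemma finite_rays: "finite (rays \<Sigma>)"
  using smooth finite_cone by (auto simp: smooth_fan_def rays_def)

lemma cone_subset_rays: "\<sigma> \<in> \<Sigma> \<Longrightarrow> \<sigma> \<subseteq> rays \<Sigma>"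
  by (auto simp: rays_def)

lemma in_some_cone: obtains \<sigma> where "\<sigma> \<in> \<Sigma>" "in_cone \<sigma> x"
  using complete by (auto simp: complete_fan_def)

lemma cone_coefficients_unique:
  assumes "\<sigma> \<in> \<Sigma>" "w \<in> \<sigma>"
    and "\<And>i. (\<Sum>v\<in>\<sigma>. a v * real_of_int (v $ i)) = (\<Sum>v\<in>\<sigma>. b v * real_of_int (v $ i))"
  shows "a w = b w"
proof -
  obtain B where B: "zbasis B" "\<sigma> \<subseteq> B" using cone_in_zbasis[OF assms(1)] by blast
  let ?y = "\<chi> i. \<Sum>v\<in>\<sigma>. a v * real_of_int (v $ i)"
  have coefficient: "real_extension (\<lambda>x. zcoord B x w) ?y = c w"
    if "\<And>i. ?y $ i = (\<Sum>v\<in>\<sigma>. c v * real_of_int (v $ i))" for c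
  proof -
    have "real_extension (\<lambda>x. zcoord B x w) ?y = (\<Sum>v\<in>\<sigma>. c v * real_of_int (zcoord B v w))"
      by (rule real_extension_combination[OF additive_zcoord[OF B(1)] finite_cone[OF assms(1)] that])
    also have "\<dots> = c w"
      using B assms(2) finite_cone[OF assms(1)]
      by (simp add: zcoord_basis_vector subset_iff if_distrib sum.delta' cong: if_cong)
    finally show ?thesis .
  qed
  show ?thesis using coefficient[of a] coefficient[of b] assms(3) by simp
qed

lemma additive_eq_on_rays:
  fixes f g :: "int ^ 'n \<Rightarrow> int"
  assumes "additive f" "additive g" "\<And>v. v \<in> rays \<Sigma> \<Longrightarrow> f v = g v"
  shows "f = g"
proof
  fix x :: "int ^ 'n"
  let ?h = "\<lambda>x. f x - g x" and ?y = "\<chi> i. real_of_int (x $ i)"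
  have h: "additive ?h" using assms(1,2) by (simp add: additive_def)
  obtain \<sigma> a where \<sigma>: "\<sigma> \<in> \<Sigma>" "\<And>i. ?y $ i = (\<Sum>v\<in>\<sigma>. a v * real_of_int (v $ i))"
    by (metis in_some_cone in_cone_def)
  have "real_of_int (?h x) = (\<Sum>v\<in>\<sigma>. a v * real_of_int (?h v))"
    using real_extension_of_int[OF h] real_extension_combination[OF h finite_cone[OF \<sigma>(1)] \<sigma>(2)] by simp
  also have "\<dots> = 0" using assms(3) cone_subset_rays[OF \<sigma>(1)] by (intro sum.neutral) auto
  finally show "f x = g x" by simp
qed

lemma divm_inj:
  assumes "m \<in> charlat" "m' \<in> charlat" "divm \<Sigma> m = divm \<Sigma> m'"
  shows "m = m'"
proof (rule additive_eq_on_rays)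
  show "additive m" "additive m'" using assms(1,2) by (simp_all add: charlat_iff_additive)
  show "m v = m' v" if "v \<in> rays \<Sigma>" for v
    using that fun_cong[OF assms(3), of v] by (simp add: divm_def)
qed

lemma aut_fixing_rays_eq_id:
  assumes "g \<in> AutSigma \<Sigma>" "\<And>v. v \<in> rays \<Sigma> \<Longrightarrow> g v = v"
  shows "g = id"
proof
  fix x :: "int ^ 'n"
  have "(\<lambda>x. g x $ i) = (\<lambda>x. x $ i)" for i
    using aut_additive[OF assms(1)] assms(2) by (intro additive_eq_on_rays) (simp_all add: additive_def)
  then show "g x = id x" by (simp add: vec_eq_iff fun_eq_iff)
qed

lemma aut_finite_order:
  assumes "g \<in> AutSigma \<Sigma>"
  obtains k where "k > 0" "g ^^ k = id"
proof -
  define p where "p v = (if v \<in> rays \<Sigma> then g v else v)" for v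
  have "bij_betw g (rays \<Sigma>) (rays \<Sigma>)"
    using inj_on_subset[OF bij_is_inj[OF aut_bij[OF assms]] subset_UNIV] aut_image_rays[OF assms]
    by (simp add: bij_betw_def)
  then have "p permutes rays \<Sigma>"
    by (intro bij_imp_permutes) (auto simp: p_def cong: bij_betw_cong)
  then obtain k where k: "p ^^ k = id" "k > 0"
    using permutation_is_nilpotent permutes_imp_permutation finite_rays by blast
  have "(g ^^ j) v = (p ^^ j) v" if "v \<in> rays \<Sigma>" for j v
  proof (induction j)
    case (Suc j)
    have "(g ^^ j) v \<in> rays \<Sigma>" using that aut_mem_rays_iff[OF aut_funpow[OF assms]] by blast
    with Suc show ?case by (simp add: p_def)
  qed simp
  then have "g ^^ k = id" using k(1) by (intro aut_fixing_rays_eq_id aut_funpow assms) simp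
  with k(2) show ?thesis using that by blast
qed

(* The sum of the generators of tau lies in the relative interior of tau. *)
lemma cone_sum_in_cone_imp_subset:
  assumes "\<tau> \<in> \<Sigma>" "\<sigma> \<in> \<Sigma>" "in_cone \<sigma> (\<chi> i. \<Sum>u\<in>\<tau>. real_of_int (u $ i))"
  shows "\<tau> \<subseteq> \<sigma>"
proof
  fix u assume "u \<in> \<tau>"
  let ?y = "\<chi> i. \<Sum>u\<in>\<tau>. real_of_int (u $ i)"
  have "in_cone \<tau> ?y" unfolding in_cone_def by (intro exI[of _ "\<lambda>_. 1"]) simp
  then obtain b where b: "\<And>i. ?y $ i = (\<Sum>v\<in>\<sigma> \<inter> \<tau>. b v * real_of_int (v $ i))"
    using in_cone_Int[OF assms(2,1) assms(3)] unfolding in_cone_def by blast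
  have "(\<Sum>v\<in>\<tau>. (if v \<in> \<sigma> then b v else 0) * real_of_int (v $ i)) = (\<Sum>v\<in>\<sigma> \<inter> \<tau>. b v * real_of_int (v $ i))"
    for i
    unfolding Int_commute[of \<sigma> \<tau>] sum.inter_restrict[OF finite_cone[OF assms(1)]] by (intro sum.cong) auto
  then have "(\<Sum>v\<in>\<tau>. (if v \<in> \<sigma> then b v else 0) * real_of_int (v $ i)) = (\<Sum>v\<in>\<tau>. 1 * real_of_int (v $ i))"
    for i
    using b[of i] by simp
  from cone_coefficients_unique[OF assms(1) \<open>u \<in> \<tau>\<close> this] show "u \<in> \<sigma>"
    by (simp split: if_splits)
qed

lemma real_extension_swap_functional:
  assumes m: "additive m" "\<And>v. v \<in> rays \<Sigma> \<Longrightarrow> m v = prime_div \<rho> v - prime_div \<rho>' v"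
    and "\<rho> \<noteq> \<rho>'"
    and \<sigma>: "\<sigma> \<in> \<Sigma>" "\<And>i. y $ i = (\<Sum>v\<in>\<sigma>. a v * real_of_int (v $ i))"
  shows "real_extension m y = (if \<rho> \<in> \<sigma> then a \<rho> else 0) - (if \<rho>' \<in> \<sigma> then a \<rho>' else 0)"
proof -
  have m_ray: "real_of_int (m v) = of_bool (v = \<rho>) - of_bool (v = \<rho>')" if "v \<in> rays \<Sigma>" for v
    using m(2)[OF that] assms(3) by (auto simp: prime_div_def)
  have "real_extension m y = (\<Sum>v\<in>\<sigma>. a v * of_bool (v = \<rho>)) - (\<Sum>v\<in>\<sigma>. a v * of_bool (v = \<rho>'))"
    unfolding real_extension_combination[OF m(1) finite_cone[OF \<sigma>(1)] \<sigma>(2)] sum_subtractf[symmetric]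
    by (rule sum.cong[OF refl])
      (simp only: m_ray[OF subsetD[OF cone_subset_rays[OF \<sigma>(1)]]] right_diff_distrib)
  then show ?thesis by (simp only: sum_mult_of_bool_point[OF finite_cone[OF \<sigma>(1)]])
qed

(* The point p = rho' + (sum of the generators of tau) lies in some cone sigma. Evaluating m at p
  shows that rho' is a generator of sigma with coefficient at least 1, so p - rho' lies in sigma
  as well, which forces tau to be a face of sigma. *)
lemma facet_swap:
  assumes m: "additive m" "\<And>v. v \<in> rays \<Sigma> \<Longrightarrow> m v = prime_div \<rho> v - prime_div \<rho>' v"
    and \<kappa>: "\<kappa> \<in> \<Sigma>" "\<rho> \<in> \<kappa>" "\<rho>' \<in> rays \<Sigma>" "\<rho>' \<notin> \<kappa>"
  shows "insert \<rho>' (\<kappa> - {\<rho>}) \<in> \<Sigma>"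
proof -
  define \<tau> where "\<tau> = \<kappa> - {\<rho>}"
  have \<tau>: "\<tau> \<in> \<Sigma>" "finite \<tau>" "\<rho>' \<notin> \<tau>" "\<rho> \<notin> \<tau>" "\<tau> \<subseteq> rays \<Sigma>"
    using face_in_fan[OF \<kappa>(1)] finite_cone[OF \<kappa>(1)] cone_subset_rays[OF \<kappa>(1)] \<kappa>(4)
    by (auto simp: \<tau>_def)
  have "\<rho> \<noteq> \<rho>'" using \<kappa>(2,4) by blast
  let ?p = "\<chi> i. \<Sum>u\<in>insert \<rho>' \<tau>. real_of_int (u $ i)"
  obtain \<sigma> where \<sigma>: "\<sigma> \<in> \<Sigma>" "in_cone \<sigma> ?p" by (rule in_some_cone)
  then obtain a where a: "\<forall>v\<in>\<sigma>. 0 \<le> a v" and p: "\<And>i. ?p $ i = (\<Sum>v\<in>\<sigma>. a v * real_of_int (v $ i))"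
    unfolding in_cone_def by blast
  have "m u = 0" if "u \<in> \<tau>" for u
    using that \<tau>(3-5) m(2)[of u] by (auto simp: prime_div_def)
  moreover have "m \<rho>' = -1" using m(2)[OF \<kappa>(3)] \<open>\<rho> \<noteq> \<rho>'\<close> by (simp add: prime_div_def)
  ultimately have "real_extension m ?p = -1"
    using real_extension_combination[OF m(1), of "insert \<rho>' \<tau>" ?p "\<lambda>_. 1"] \<tau>(2,3) by simp
  then have "(if \<rho> \<in> \<sigma> then a \<rho> else 0) - (if \<rho>' \<in> \<sigma> then a \<rho>' else 0) = -1"
    by (simp only: real_extension_swap_functional[OF m \<open>\<rho> \<noteq> \<rho>'\<close> \<sigma>(1) p])
  then have "\<rho>' \<in> \<sigma>" "1 \<le> a \<rho>'" using a by (auto split: if_splits)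
  then have "in_cone \<sigma> (\<chi> i. ?p $ i - real_of_int (\<rho>' $ i))"
    using in_cone_minus_generator[OF finite_cone[OF \<sigma>(1)] _ a _ p] by blast
  moreover have "(\<chi> i. ?p $ i - real_of_int (\<rho>' $ i)) = (\<chi> i. \<Sum>u\<in>\<tau>. real_of_int (u $ i))"
    using \<tau>(2,3) by simp
  ultimately have "\<tau> \<subseteq> \<sigma>" using cone_sum_in_cone_imp_subset[OF \<tau>(1) \<sigma>(1)] by simp
  with \<open>\<rho>' \<in> \<sigma>\<close> show ?thesis using face_in_fan[OF \<sigma>(1)] unfolding \<tau>_def by blast
qed

(* m_rays says div(chi^m) = D_rho1 - D_rho2, i.e. [D_rho1] = [D_rho2]. The reflection in the
  hyperplane m = 0 along rho1 - rho2 is then an automorphism of the fan acting trivially on Pic(X). *)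
context
  fixes m \<rho>1 \<rho>2
  assumes m: "m \<in> charlat"
    and rays: "\<rho>1 \<in> rays \<Sigma>" "\<rho>2 \<in> rays \<Sigma>" "\<rho>1 \<noteq> \<rho>2"
    and m_rays: "\<And>v. v \<in> rays \<Sigma> \<Longrightarrow> m v = prime_div \<rho>1 v - prime_div \<rho>2 v"
begin

lemma m_on_swapped_rays: "m \<rho>1 = 1" "m \<rho>2 = -1"
  using m_rays[OF rays(1)] m_rays[OF rays(2)] rays(3) not_sym[OF rays(3)] by (simp_all add: prime_div_def)

lemma reflection_ray:
  assumes "v \<in> rays \<Sigma>"
  shows "reflection m (\<rho>1 - \<rho>2) v = transpose \<rho>1 \<rho>2 v"
proof -
  consider "v = \<rho>1" | "v = \<rho>2" | "v \<noteq> \<rho>1" "v \<noteq> \<rho>2" by blast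
  then show ?thesis
  proof cases
    case 1
    then show ?thesis using m_on_swapped_rays by (simp add: reflection_def)
  next
    case 2
    have "\<rho>2 - (-1) *s (\<rho>1 - \<rho>2) = \<rho>1" by (simp add: vec_eq_iff)
    then show ?thesis using 2 m_on_swapped_rays by (simp add: reflection_def)
  next
    case 3
    then show ?thesis using m_rays[OF assms] by (simp add: reflection_def prime_div_def)
  qed
qed

lemma reflection_twice: "reflection m (\<rho>1 - \<rho>2) (reflection m (\<rho>1 - \<rho>2) x) = x"
proof (rule reflection_reflection)
  show "additive m" using m by (simp add: charlat_iff_additive)
  then show "m (\<rho>1 - \<rho>2) = 2" using m_on_swapped_rays by (simp add: additive.diff)
qed

lemma transpose_cone_in_fan:
  assumes "\<kappa> \<in> \<Sigma>"
  shows "transpose \<rho>1 \<rho>2 ` \<kappa> \<in> \<Sigma>"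
proof -
  have swap_image: "transpose a b ` \<kappa> = insert b (\<kappa> - {a})" if "a \<in> \<kappa>" "b \<notin> \<kappa>" for a b
    unfolding set_eq_iff in_transpose_image_iff transpose_def using that by auto
  have "additive m" "additive (\<lambda>x. - m x)"
    using m by (simp_all add: charlat_iff_additive additive_def)
  consider "\<rho>1 \<in> \<kappa> \<longleftrightarrow> \<rho>2 \<in> \<kappa>" | "\<rho>1 \<in> \<kappa>" "\<rho>2 \<notin> \<kappa>" | "\<rho>2 \<in> \<kappa>" "\<rho>1 \<notin> \<kappa>" by blast
  then show ?thesis
  proof cases
    case 1
    then show ?thesis using assms by (simp add: transpose_image_eq)
  next
    case 2
    then show ?thesis
      using facet_swap[OF \<open>additive m\<close> m_rays assms _ rays(2)] by (simp add: swap_image)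
  next
    case 3
    have "- m v = prime_div \<rho>2 v - prime_div \<rho>1 v" if "v \<in> rays \<Sigma>" for v
      using m_rays[OF that] by simp
    with 3 show ?thesis
      using facet_swap[OF \<open>additive (\<lambda>x. - m x)\<close> _ assms _ rays(1)]
      by (simp add: swap_image transpose_commute[of \<rho>1])
  qed
qed

lemma reflection_in_AutSigma: "reflection m (\<rho>1 - \<rho>2) \<in> AutSigma \<Sigma>"
  unfolding AutSigma_def mem_Collect_eq
proof (intro conjI)
  let ?s = "reflection m (\<rho>1 - \<rho>2)"
  show "bij ?s" using reflection_twice by (intro o_bij[of ?s]) (simp_all add: fun_eq_iff)
  show "additive_map ?s" using m by (simp add: additive_map_reflection charlat_iff_additive)
  have cone: "?s ` \<kappa> \<in> \<Sigma>" if "\<kappa> \<in> \<Sigma>" for \<kappa>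
  proof -
    have "?s ` \<kappa> = transpose \<rho>1 \<rho>2 ` \<kappa>"
      using cone_subset_rays[OF that] reflection_ray by (intro image_cong) auto
    then show ?thesis using transpose_cone_in_fan[OF that] by simp
  qed
  show "(\<lambda>\<sigma>. ?s ` \<sigma>) ` \<Sigma> = \<Sigma>"
  proof (intro equalityI subsetI)
    fix \<kappa> assume "\<kappa> \<in> (\<lambda>\<sigma>. ?s ` \<sigma>) ` \<Sigma>"
    then show "\<kappa> \<in> \<Sigma>" using cone by blast
  next
    fix \<kappa> assume "\<kappa> \<in> \<Sigma>"
    moreover have "\<kappa> = ?s ` ?s ` \<kappa>" by (simp add: image_image reflection_twice)
    ultimately show "\<kappa> \<in> (\<lambda>\<sigma>. ?s ` \<sigma>) ` \<Sigma>" using cone by blast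
  qed
qed

lemma reflection_inv: "fun_inv (reflection m (\<rho>1 - \<rho>2)) = reflection m (\<rho>1 - \<rho>2)"
  by (rule inv_unique_comp) (simp_all add: fun_eq_iff reflection_twice)

lemma act_reflection:
  assumes "D \<in> carrier (TDiv \<Sigma>)"
  shows "act (reflection m (\<rho>1 - \<rho>2)) D = (\<lambda>v. divm \<Sigma> (\<lambda>x. (D \<rho>2 - D \<rho>1) * m x) v + D v)"
proof
  fix v
  show "act (reflection m (\<rho>1 - \<rho>2)) D v = divm \<Sigma> (\<lambda>x. (D \<rho>2 - D \<rho>1) * m x) v + D v"
  proof (cases "v \<in> rays \<Sigma>")
    case True
    consider "v = \<rho>1" | "v = \<rho>2" | "v \<noteq> \<rho>1" "v \<noteq> \<rho>2" by blast
    then show ?thesis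
      using True m_rays[OF True] rays(3)
      by cases (simp_all add: act_apply reflection_inv reflection_ray divm_def prime_div_def)
  next
    case False
    then have "reflection m (\<rho>1 - \<rho>2) v \<notin> rays \<Sigma>"
      using aut_mem_rays_iff[OF reflection_in_AutSigma] by blast
    with False assms show ?thesis by (simp add: act_apply reflection_inv divm_def TDiv_carrier)
  qed
qed

lemma picact_reflection: "picact \<Sigma> (reflection m (\<rho>1 - \<rho>2)) = \<one>\<^bsub>BijGroup (carrier (Pic \<Sigma>))\<^esub>"
proof -
  let ?s = "reflection m (\<rho>1 - \<rho>2)"
  have "picact \<Sigma> ?s C = C" if C: "C \<in> carrier (Pic \<Sigma>)" for C
  proof -
    obtain D where D: "D \<in> carrier (TDiv \<Sigma>)" "C = cls \<Sigma> D" using C by (auto simp: Pic_carrier)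
    have "cls \<Sigma> (act ?s D) = cls \<Sigma> D"
      unfolding cls_eq_iff[OF act_TDiv[OF reflection_in_AutSigma D(1)] D(1)]
      by (rule bexI[of _ "\<lambda>x. (D \<rho>2 - D \<rho>1) * m x"])
        (simp_all add: act_reflection[OF D(1)] charlat_scale[OF m])
    then show ?thesis using picact_cls[OF reflection_in_AutSigma D(1)] D(2) by simp
  qed
  then show ?thesis
    by (intro extensionalityI[where A = "carrier (Pic \<Sigma>)"]) (simp_all add: BijGroup_def picact_def)
qed

end

lemma reflection_swapping_rays:
  assumes "\<rho>1 \<in> rays \<Sigma>" "\<rho>2 \<in> rays \<Sigma>" "\<rho>1 \<noteq> \<rho>2"
    and "ray_class \<Sigma> \<rho>1 = ray_class \<Sigma> \<rho>2"
  obtains s where "s \<in> AutSigma \<Sigma>" "s \<rho>1 = \<rho>2" "picact \<Sigma> s = \<one>\<^bsub>BijGroup (carrier (Pic \<Sigma>))\<^esub>"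
proof -
  obtain m where m: "m \<in> charlat" "prime_div \<rho>1 = (\<lambda>v. divm \<Sigma> m v + prime_div \<rho>2 v)"
    using cls_eq_iff[OF prime_div_carrier[OF assms(1)] prime_div_carrier[OF assms(2)]] assms(4) by blast
  have m_rays: "m v = prime_div \<rho>1 v - prime_div \<rho>2 v" if "v \<in> rays \<Sigma>" for v
    using fun_cong[OF m(2), of v] that by (simp add: divm_def)
  show ?thesis
  proof (rule that)
    show "reflection m (\<rho>1 - \<rho>2) \<in> AutSigma \<Sigma>"
      by (rule reflection_in_AutSigma[OF m(1) assms(1-3) m_rays])
    show "reflection m (\<rho>1 - \<rho>2) \<rho>1 = \<rho>2"
      using reflection_ray[OF m(1) assms(1-3) m_rays assms(1)] by simp
    show "picact \<Sigma> (reflection m (\<rho>1 - \<rho>2)) = \<one>\<^bsub>BijGroup (carrier (Pic \<Sigma>))\<^esub>"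
      by (rule picact_reflection[OF m(1) assms(1-3) m_rays])
  qed
qed

end

section \<open>The group W and its cocycles\<close>

locale fan_symmetries = smooth_complete_fan \<Sigma> for \<Sigma> :: "(int ^ 'n::finite) set set" +
  fixes J :: "((int ^ 'n \<Rightarrow> int) set \<Rightarrow> (int ^ 'n \<Rightarrow> int) set) set"
  assumes J_subgroup: "subgroup J (BijGroup (carrier (Pic \<Sigma>)))"
    and J_AutP: "J \<subseteq> AutP \<Sigma>"
begin

abbreviation W :: "(int ^ 'n \<Rightarrow> int ^ 'n) set" where
  "W \<equiv> Wgrp \<Sigma> J"

interpretation Bij: group "BijGroup (carrier (Pic \<Sigma>))"
  by (rule group_BijGroup)

lemma W_iff: "g \<in> W \<longleftrightarrow> g \<in> AutSigma \<Sigma> \<and> picact \<Sigma> g \<in> J"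
  by (simp add: Wgrp_def)

lemma W_aut: "g \<in> W \<Longrightarrow> g \<in> AutSigma \<Sigma>"
  by (simp add: W_iff)

lemma W_bij: "g \<in> W \<Longrightarrow> bij g"
  using W_aut aut_bij by blast

lemma W_id: "id \<in> W"
  using subgroup.one_closed[OF J_subgroup] by (simp add: W_iff aut_id picact_id)

lemma W_comp: "g \<in> W \<Longrightarrow> h \<in> W \<Longrightarrow> g \<circ> h \<in> W"
  using subgroup.m_closed[OF J_subgroup] by (simp add: W_iff aut_comp picact_comp)

lemma W_inv:
  assumes "g \<in> W"
  shows "fun_inv g \<in> W"
proof -
  have g: "g \<in> AutSigma \<Sigma>" "fun_inv g \<in> AutSigma \<Sigma>" using W_aut[OF assms] aut_inv by blast+
  have "fun_inv g \<circ> g = id" using W_bij[OF assms] by (simp add: fun_eq_iff bij_is_inj inv_f_f)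
  then have "picact \<Sigma> (fun_inv g) \<otimes>\<^bsub>BijGroup (carrier (Pic \<Sigma>))\<^esub> picact \<Sigma> g = \<one>\<^bsub>BijGroup (carrier (Pic \<Sigma>))\<^esub>"
    by (simp add: g picact_id flip: picact_comp)
  then have "inv\<^bsub>BijGroup (carrier (Pic \<Sigma>))\<^esub> picact \<Sigma> g = picact \<Sigma> (fun_inv g)"
    by (rule Bij.inv_equality) (simp_all add: BijGroup_def picact_Bij g)
  moreover have "inv\<^bsub>BijGroup (carrier (Pic \<Sigma>))\<^esub> picact \<Sigma> g \<in> J"
    using subgroup.m_inv_closed[OF J_subgroup] assms by (simp add: W_iff)
  ultimately show ?thesis using g(2) by (simp add: W_iff)
qed

lemma W_funpow: "g \<in> W \<Longrightarrow> g ^^ k \<in> W"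
  by (induction k) (simp_all add: W_id W_comp)

lemma W_inv_apply: "g \<in> W \<Longrightarrow> fun_inv g (g x) = x"
  and W_apply_inv: "g \<in> W \<Longrightarrow> g (fun_inv g x) = x"
  by (simp_all add: W_bij bij_is_inj bij_is_surj inv_f_f surj_f_inv_f)

lemma J_picactE:
  assumes "j \<in> J"
  obtains g where "g \<in> W" "j = picact \<Sigma> g"
proof -
  obtain g where "g \<in> AutSigma \<Sigma>" "j = picact \<Sigma> g" using assms J_AutP by (auto simp: AutP_def)
  with assms show ?thesis using that by (simp add: W_iff)
qed

lemma in_W_if_picact_trivial:
  "s \<in> AutSigma \<Sigma> \<Longrightarrow> picact \<Sigma> s = \<one>\<^bsub>BijGroup (carrier (Pic \<Sigma>))\<^esub> \<Longrightarrow> s \<in> W"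
  using subgroup.one_closed[OF J_subgroup] by (simp add: W_iff)

definition W_orbit :: "int ^ 'n \<Rightarrow> (int ^ 'n) set" where
  "W_orbit x = (\<lambda>g. g x) ` W"

lemma mem_W_orbit_iff: "y \<in> W_orbit x \<longleftrightarrow> (\<exists>g\<in>W. y = g x)"
  by (auto simp: W_orbit_def)

lemma W_orbit_self: "x \<in> W_orbit x"
  unfolding W_orbit_def using W_id by (rule rev_image_eqI) simp

lemma W_orbit_closed: "h \<in> W \<Longrightarrow> y \<in> W_orbit x \<Longrightarrow> h y \<in> W_orbit x"
  by (auto simp: mem_W_orbit_iff intro: bexI[of _ "h \<circ> _"] W_comp)

lemma W_orbit_apply:
  assumes "g \<in> W"
  shows "W_orbit (g x) = W_orbit x"
proof (intro equalityI subsetI)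
  fix y assume "y \<in> W_orbit (g x)"
  then obtain h where "h \<in> W" "y = (h \<circ> g) x" by (auto simp: mem_W_orbit_iff)
  then show "y \<in> W_orbit x" using W_comp[OF _ assms] unfolding mem_W_orbit_iff by blast
next
  fix y assume "y \<in> W_orbit x"
  then obtain h where "h \<in> W" "y = (h \<circ> fun_inv g) (g x)" by (auto simp: mem_W_orbit_iff W_inv_apply[OF assms])
  then show "y \<in> W_orbit (g x)" using W_comp[OF _ W_inv[OF assms]] unfolding mem_W_orbit_iff by blast
qed

lemma W_orbit_rays: "\<rho> \<in> rays \<Sigma> \<Longrightarrow> W_orbit \<rho> \<subseteq> rays \<Sigma>"
  by (auto simp: mem_W_orbit_iff aut_mem_rays_iff[OF W_aut])

lemma W_orbit_transversal:
  obtains rep sel where "\<And>g x. g \<in> W \<Longrightarrow> rep (g x) = rep x" "\<And>x. sel x \<in> W" "\<And>x. sel x (rep x) = x"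
proof
  let ?rep = "\<lambda>x. SOME y. y \<in> W_orbit x"
  show "?rep (g x) = ?rep x" if "g \<in> W" for g x by (simp add: W_orbit_apply[OF that])
  have "\<exists>g. g \<in> W \<and> g (?rep x) = x" for x
  proof -
    have "?rep x \<in> W_orbit x" using W_orbit_self by (rule someI)
    then obtain h where "h \<in> W" "?rep x = h x" by (auto simp: mem_W_orbit_iff)
    then show ?thesis using W_inv W_inv_apply by metis
  qed
  then show "(SOME g. g \<in> W \<and> g (?rep x) = x) \<in> W" "(SOME g. g \<in> W \<and> g (?rep x) = x) (?rep x) = x" for x
    by (metis (mono_tags, lifting) someI_ex)+
qed

lemma Z1_cocycle: "f \<in> Z1 W \<Longrightarrow> g \<in> W \<Longrightarrow> h \<in> W \<Longrightarrow> f (g \<circ> h) v = f g v + act g (f h) v"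
  by (simp add: Z1_def)

lemma Z1_charlat: "f \<in> Z1 W \<Longrightarrow> g \<in> W \<Longrightarrow> f g \<in> charlat"
  by (auto simp: Z1_def)

lemma Z1_id: "f \<in> Z1 W \<Longrightarrow> f id v = 0"
  using Z1_cocycle[of f id id v] W_id by (simp add: act_id)

(* s has some finite order k, and f (s^k) r = k * f s r. *)

lemma cocycle_vanishes_on_stabilizer:
  assumes f: "f \<in> Z1 W" and s: "s \<in> W" "s r = r"
  shows "f s r = 0"
proof -
  obtain k where k: "k > 0" "s ^^ k = id" using aut_finite_order[OF W_aut[OF s(1)]] by blast
  have "fun_inv s r = r" using W_inv_apply[OF s(1), of r] s(2) by simp
  then have "f (s ^^ j) r = int j * f s r" for j
    by (induction j)
      (simp_all add: Z1_id[OF f] Z1_cocycle[OF f s(1) W_funpow[OF s(1)]] act_apply algebra_simps)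
  from this[of k] show ?thesis using k Z1_id[OF f] by simp
qed

lemma cocycle_value_at_image:
  assumes f: "f \<in> Z1 W" and gh: "g \<in> W" "h \<in> W" "g x = h x"
  shows "f g (g x) = f h (h x)"
proof -
  let ?s = "fun_inv g \<circ> h"
  have s: "?s \<in> W" "?s x = x"
    using W_comp[OF W_inv[OF gh(1)] gh(2)] by (simp_all add: gh(3)[symmetric] W_inv_apply[OF gh(1)])
  have "h = g \<circ> ?s" using W_apply_inv[OF gh(1)] by (simp add: fun_eq_iff)
  then have "f h (h x) = f g (h x) + act g (f ?s) (h x)" using Z1_cocycle[OF f gh(1) s(1)] by metis
  also have "act g (f ?s) (h x) = f ?s x" using s(2) by (simp add: act_apply)
  also have "f ?s x = 0" by (rule cocycle_vanishes_on_stabilizer[OF f s])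
  finally show ?thesis using gh(3) by simp
qed

definition cobounds :: "((int ^ 'n \<Rightarrow> int ^ 'n) \<Rightarrow> int ^ 'n \<Rightarrow> int) \<Rightarrow> (int ^ 'n \<Rightarrow> int) \<Rightarrow> bool" where
  "cobounds f D \<longleftrightarrow> D \<in> carrier (TDiv \<Sigma>) \<and> (\<forall>g\<in>W. \<forall>v. divm \<Sigma> (f g) v = act g D v - D v)"

(* This is H^1(W, TDiv(X)) = 0. With sel v in W carrying a fixed representative of the orbit of v
  to v, the divisor D(v) = - f (sel v) v works; cocycle_value_at_image makes this independent of
  the choice of sel v. *)

lemma cocycle_cobounded:
  assumes f: "f \<in> Z1 W"
  obtains D where "cobounds f D"
proof -
  obtain rep sel where rep: "\<And>g x. g \<in> W \<Longrightarrow> rep (g x) = rep x"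
    and sel: "\<And>x. sel x \<in> W" "\<And>x. sel x (rep x) = x"
    using W_orbit_transversal by blast
  define D where "D v = (if v \<in> rays \<Sigma> then - f (sel v) v else 0)" for v
  have "divm \<Sigma> (f g) v = act g D v - D v" if g: "g \<in> W" for g v
  proof (cases "v \<in> rays \<Sigma>")
    case False
    then have "fun_inv g v \<notin> rays \<Sigma>" using aut_mem_rays_iff[OF W_aut[OF W_inv[OF g]]] by blast
    with False show ?thesis by (simp add: divm_def act_apply D_def)
  next
    case True
    let ?u = "fun_inv g v"
    have u: "?u \<in> rays \<Sigma>" "g ?u = v"
      using True aut_mem_rays_iff[OF W_aut[OF W_inv[OF g]]] W_apply_inv[OF g] by auto
    have "rep ?u = rep v" using rep[OF g, of ?u] u(2) by simp
    then have img: "(g \<circ> sel ?u) (rep v) = sel v (rep v)" using sel(2)[of ?u] sel(2)[of v] u(2) by simp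
    have "f (g \<circ> sel ?u) v = f (sel v) v"
      using cocycle_value_at_image[OF f W_comp[OF g sel(1)] sel(1) img] img sel(2)[of v] by (simp add: comp_def)
    moreover have "f (g \<circ> sel ?u) v = f g v + f (sel ?u) ?u"
      using Z1_cocycle[OF f g sel(1)] by (simp add: act_apply)
    ultimately show ?thesis using True u(1) by (simp add: divm_def act_apply D_def)
  qed
  moreover have "D \<in> carrier (TDiv \<Sigma>)" by (simp add: D_def TDiv_carrier)
  ultimately have "cobounds f D" by (simp add: cobounds_def)
  then show ?thesis by (rule that)
qed

section \<open>The first isomorphism\<close>

lemma PicInv_iff: "C \<in> PicInv \<Sigma> J \<longleftrightarrow> C \<in> carrier (Pic \<Sigma>) \<and> (\<forall>g\<in>W. picact \<Sigma> g C = C)"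
  by (auto simp: PicInv_def W_iff elim!: J_picactE)

lemma TDivInv_iff: "E \<in> TDivInv \<Sigma> W \<longleftrightarrow> E \<in> carrier (TDiv \<Sigma>) \<and> (\<forall>g\<in>W. act g E = E)"
  by (simp add: TDivInv_def)

lemma subgroup_PicInv: "subgroup (PicInv \<Sigma> J) (Pic \<Sigma>)"
proof (rule Pic.subgroupI)
  show "PicInv \<Sigma> J \<subseteq> carrier (Pic \<Sigma>)" by (auto simp: PicInv_iff)
  have "\<one>\<^bsub>Pic \<Sigma>\<^esub> \<in> PicInv \<Sigma> J"
    using group_hom.hom_one[OF group_hom_picact[OF W_aut]] by (simp add: PicInv_iff)
  then show "PicInv \<Sigma> J \<noteq> {}" by blast
next
  fix C assume "C \<in> PicInv \<Sigma> J"
  then show "inv\<^bsub>Pic \<Sigma>\<^esub> C \<in> PicInv \<Sigma> J"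
    using group_hom.hom_inv[OF group_hom_picact[OF W_aut]] by (simp add: PicInv_iff)
next
  fix C C' assume "C \<in> PicInv \<Sigma> J" "C' \<in> PicInv \<Sigma> J"
  then show "C \<otimes>\<^bsub>Pic \<Sigma>\<^esub> C' \<in> PicInv \<Sigma> J"
    using picact_mult[OF W_aut] by (simp add: PicInv_iff)
qed

lemma comm_group_PicInvGrp: "comm_group (PicInvGrp \<Sigma> J)"
proof -
  have "group (PicInvGrp \<Sigma> J)"
    unfolding PicInvGrp_def by (rule Pic.subgroup_imp_group[OF subgroup_PicInv])
  then show ?thesis
    by (rule group.group_comm_groupI) (simp add: PicInvGrp_def Pic.m_comm PicInv_iff)
qed

interpretation PicInvGrp: comm_group "PicInvGrp \<Sigma> J"
  by (rule comm_group_PicInvGrp)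

lemma subgroup_TDivInv: "subgroup (TDivInv \<Sigma> W) (TDiv \<Sigma>)"
proof (rule TDiv.subgroupI)
  show "TDivInv \<Sigma> W \<subseteq> carrier (TDiv \<Sigma>)" by (auto simp: TDivInv_iff)
  have "(\<lambda>v. 0) \<in> TDivInv \<Sigma> W" by (simp add: TDivInv_iff TDiv_carrier act_def o_def)
  then show "TDivInv \<Sigma> W \<noteq> {}" by blast
next
  fix E assume "E \<in> TDivInv \<Sigma> W"
  then show "inv\<^bsub>TDiv \<Sigma>\<^esub> E \<in> TDivInv \<Sigma> W"
    by (simp add: TDivInv_iff TDiv_inv TDiv_carrier act_def o_def fun_eq_iff)
next
  fix E E' assume "E \<in> TDivInv \<Sigma> W" "E' \<in> TDivInv \<Sigma> W"
  then show "E \<otimes>\<^bsub>TDiv \<Sigma>\<^esub> E' \<in> TDivInv \<Sigma> W"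
    by (simp add: TDivInv_iff TDiv_mult TDiv_carrier act_def o_def fun_eq_iff)
qed

abbreviation invariant_classes :: "(int ^ 'n \<Rightarrow> int) set set" where
  "invariant_classes \<equiv> cls \<Sigma> ` TDivInv \<Sigma> W"

lemma subgroup_invariant_classes: "subgroup invariant_classes (Pic \<Sigma>)"
  by (rule group_hom.subgroup_img_is_subgroup[OF group_hom_cls subgroup_TDivInv])

lemma invariant_classes_subset_PicInv: "invariant_classes \<subseteq> PicInv \<Sigma> J"
  by (auto simp: PicInv_iff TDivInv_iff cls_carrier picact_cls W_aut)

lemma normal_invariant_classes: "invariant_classes \<lhd> PicInvGrp \<Sigma> J"
  using Pic.subgroup_incl[OF subgroup_invariant_classes subgroup_PicInv invariant_classes_subset_PicInv]
  unfolding PicInvGrp_def[symmetric] by (rule PicInvGrp.subgroup_imp_normal)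

lemma group_Coker: "group (Coker \<Sigma> J)"
  unfolding Coker_def by (rule normal.factorgroup_is_group[OF normal_invariant_classes])

lemma Z1_add: "f \<in> Z1 W \<Longrightarrow> f' \<in> Z1 W \<Longrightarrow> (\<lambda>g\<in>W. \<lambda>v. f g v + f' g v) \<in> Z1 W"
  by (auto simp: Z1_def PiE_iff W_comp act_def fun_eq_iff intro!: charlat_add)

lemma Z1_zero: "(\<lambda>g\<in>W. \<lambda>v. 0) \<in> Z1 W"
  by (auto simp: Z1_def charlat_zero W_comp act_def)

lemma Z1_uminus: "f \<in> Z1 W \<Longrightarrow> (\<lambda>g\<in>W. \<lambda>v. - f g v) \<in> Z1 W"
  using charlat_scale[of _ "-1"] by (auto simp: Z1_def W_comp act_def fun_eq_iff)

lemma comm_group_Z1grp: "comm_group (Z1grp W)"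
proof (rule comm_groupI)
  fix f assume f: "f \<in> carrier (Z1grp W)"
  then have "f \<in> extensional W" by (simp add: Z1grp_def Z1_def PiE_def)
  then show "\<one>\<^bsub>Z1grp W\<^esub> \<otimes>\<^bsub>Z1grp W\<^esub> f = f"
    by (simp add: Z1grp_def restrict_def extensional_def fun_eq_iff)
  show "\<exists>f'\<in>carrier (Z1grp W). f' \<otimes>\<^bsub>Z1grp W\<^esub> f = \<one>\<^bsub>Z1grp W\<^esub>"
    using f Z1_uminus by (intro bexI[of _ "\<lambda>g\<in>W. \<lambda>v. - f g v"]) (simp_all add: Z1grp_def cong: restrict_cong)
qed (auto simp: Z1grp_def Z1_add Z1_zero add_ac)

interpretation Z1grp: comm_group "Z1grp W"
  by (rule comm_group_Z1grp)

definition coboundary :: "(int ^ 'n \<Rightarrow> int) \<Rightarrow> (int ^ 'n \<Rightarrow> int ^ 'n) \<Rightarrow> int ^ 'n \<Rightarrow> int" where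
  "coboundary m = (\<lambda>g\<in>W. \<lambda>v. act g m v - m v)"

lemma B1_eq: "B1 W = coboundary ` charlat"
  by (auto simp: B1_def coboundary_def)

lemma coboundary_Z1:
  assumes "m \<in> charlat"
  shows "coboundary m \<in> Z1 W"
proof -
  have "coboundary m \<in> W \<rightarrow>\<^sub>E charlat"
    using assms by (auto simp: coboundary_def intro!: charlat_diff act_charlat W_aut)
  moreover have "coboundary m (g \<circ> h) = (\<lambda>v. coboundary m g v + act g (coboundary m h) v)"
    if "g \<in> W" "h \<in> W" for g h
    using that W_comp[OF that] act_comp[OF W_bij W_bij, OF that]
    by (simp add: coboundary_def act_apply fun_eq_iff)
  ultimately show ?thesis by (simp add: Z1_def)
qed

lemma cobounds_carrier: "cobounds f D \<Longrightarrow> D \<in> carrier (TDiv \<Sigma>)"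
  by (simp add: cobounds_def)

lemma cobounds_act: "cobounds f D \<Longrightarrow> g \<in> W \<Longrightarrow> act g D = (\<lambda>v. divm \<Sigma> (f g) v + D v)"
  by (simp add: cobounds_def fun_eq_iff)

lemma cobounds_cls_PicInv:
  assumes "f \<in> Z1 W" "cobounds f D"
  shows "cls \<Sigma> D \<in> PicInv \<Sigma> J"
proof -
  note D = cobounds_carrier[OF assms(2)]
  have "cls \<Sigma> (act g D) = cls \<Sigma> D" if "g \<in> W" for g
    unfolding cls_eq_iff[OF act_TDiv[OF W_aut[OF that] D] D]
    using cobounds_act[OF assms(2) that] Z1_charlat[OF assms(1) that] by blast
  then show ?thesis by (simp add: PicInv_iff cls_carrier[OF D] picact_cls[OF W_aut] D)
qed

lemma cobounds_diff_TDivInv: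
  assumes "cobounds f D" "cobounds f D'"
  shows "(\<lambda>v. D v - D' v) \<in> TDivInv \<Sigma> W"
proof -
  have "act g (\<lambda>v. D v - D' v) = (\<lambda>v. D v - D' v)" if "g \<in> W" for g
  proof
    fix v
    have "act g D v - D v = act g D' v - D' v" using assms that by (simp add: cobounds_def)
    then show "act g (\<lambda>v. D v - D' v) v = D v - D' v" by (simp add: act_apply algebra_simps)
  qed
  then show ?thesis
    using cobounds_carrier[OF assms(1)] cobounds_carrier[OF assms(2)] by (simp add: TDivInv_iff TDiv_carrier)
qed

lemma cobounds_mult:
  assumes "cobounds f D" "cobounds f' D'"
  shows "cobounds (f \<otimes>\<^bsub>Z1grp W\<^esub> f') (\<lambda>v. D v + D' v)"
  unfolding cobounds_def
proof (intro conjI ballI allI)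
  show "(\<lambda>v. D v + D' v) \<in> carrier (TDiv \<Sigma>)"
    using cobounds_carrier[OF assms(1)] cobounds_carrier[OF assms(2)] by (simp add: TDiv_carrier)
  fix g v assume g: "g \<in> W"
  have "divm \<Sigma> (f g) v = act g D v - D v" "divm \<Sigma> (f' g) v = act g D' v - D' v"
    using assms g by (simp_all add: cobounds_def)
  then show "divm \<Sigma> ((f \<otimes>\<^bsub>Z1grp W\<^esub> f') g) v = act g (\<lambda>v. D v + D' v) v - (D v + D' v)"
    using g by (simp add: Z1grp_def divm_def act_apply split: if_splits)
qed

lemma coboundary_cobounds:
  assumes "m \<in> charlat"
  shows "cobounds (coboundary m) (divm \<Sigma> m)"
  unfolding cobounds_def
proof (intro conjI ballI allI)
  show "divm \<Sigma> m \<in> carrier (TDiv \<Sigma>)" by (rule divm_carrier)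
  fix g v assume "g \<in> W"
  then show "divm \<Sigma> (coboundary m g) v = act g (divm \<Sigma> m) v - divm \<Sigma> m v"
    using act_divm[OF W_aut, of g m] by (simp add: coboundary_def) (simp add: divm_def)
qed

(* Injectivity of M -> TDiv(X) turns the cocycle identity for D into the one for f. *)

lemma cobounds_imp_Z1:
  assumes "f \<in> W \<rightarrow>\<^sub>E charlat" "cobounds f D"
  shows "f \<in> Z1 W"
proof -
  have "f (g \<circ> h) = (\<lambda>v. f g v + act g (f h) v)" if gh: "g \<in> W" "h \<in> W" for g h
  proof (rule divm_inj)
    show "f (g \<circ> h) \<in> charlat" "(\<lambda>v. f g v + act g (f h) v) \<in> charlat"
      using assms(1) gh W_comp by (auto intro!: charlat_add act_charlat W_aut)
    have "divm \<Sigma> (f (g \<circ> h)) = (\<lambda>v. act g (act h D) v - D v)"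
      using cobounds_act[OF assms(2) W_comp[OF gh]] act_comp[OF W_bij W_bij, OF gh]
      by (simp add: fun_eq_iff)
    also have "\<dots> = (\<lambda>v. act g (divm \<Sigma> (f h)) v + act g D v - D v)"
      using cobounds_act[OF assms(2) gh(2)] by (simp add: act_apply)
    also have "\<dots> = (\<lambda>v. divm \<Sigma> (act g (f h)) v + divm \<Sigma> (f g) v)"
      using cobounds_act[OF assms(2) gh(1)] act_divm[OF W_aut[OF gh(1)]] by (simp add: fun_eq_iff)
    also have "\<dots> = divm \<Sigma> (\<lambda>v. f g v + act g (f h) v)" by (simp add: divm_def fun_eq_iff)
    finally show "divm \<Sigma> (f (g \<circ> h)) = divm \<Sigma> (\<lambda>v. f g v + act g (f h) v)" .
  qed
  with assms(1) show ?thesis by (simp add: Z1_def)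
qed

lemma PicInv_cobounded:
  assumes D: "D \<in> carrier (TDiv \<Sigma>)" and C: "cls \<Sigma> D \<in> PicInv \<Sigma> J"
  obtains f where "f \<in> Z1 W" "cobounds f D"
proof -
  have "\<exists>m\<in>charlat. act g D = (\<lambda>v. divm \<Sigma> m v + D v)" if g: "g \<in> W" for g
    using C cls_eq_iff[OF act_TDiv[OF W_aut[OF g] D] D] picact_cls[OF W_aut[OF g] D] g
    by (simp add: PicInv_iff)
  then obtain F where F: "\<And>g. g \<in> W \<Longrightarrow> F g \<in> charlat \<and> act g D = (\<lambda>v. divm \<Sigma> (F g) v + D v)"
    by metis
  define f where "f = (\<lambda>g\<in>W. F g)"
  have "cobounds f D" using D F by (simp add: cobounds_def f_def fun_eq_iff)
  moreover have "f \<in> W \<rightarrow>\<^sub>E charlat" using F by (simp add: f_def)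
  ultimately show ?thesis using that cobounds_imp_Z1 by blast
qed

lemma cobounds_invariant_class_imp_B1:
  assumes f: "f \<in> Z1 W" "cobounds f D" and "cls \<Sigma> D \<in> invariant_classes"
  shows "f \<in> B1 W"
proof -
  note D = cobounds_carrier[OF f(2)]
  obtain E where E: "E \<in> TDivInv \<Sigma> W" "cls \<Sigma> D = cls \<Sigma> E" using assms(3) by auto
  then obtain m where m: "m \<in> charlat" "D = (\<lambda>v. divm \<Sigma> m v + E v)"
    using cls_eq_iff[OF D] by (auto simp: TDivInv_iff)
  have "f g = (\<lambda>v. act g m v - m v)" if g: "g \<in> W" for g
  proof (rule divm_inj)
    show "f g \<in> charlat" "(\<lambda>v. act g m v - m v) \<in> charlat"
      using Z1_charlat[OF f(1) g] charlat_diff[OF act_charlat[OF W_aut[OF g] m(1)] m(1)] by simp_all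
    have E_fixed: "act g E = E" using E(1) g by (simp add: TDivInv_iff)
    have "divm \<Sigma> (f g) = (\<lambda>v. act g (divm \<Sigma> m) v + act g E v - divm \<Sigma> m v - E v)"
      using f(2) g by (simp add: cobounds_def m(2) fun_eq_iff act_apply)
    also have "\<dots> = divm \<Sigma> (\<lambda>v. act g m v - m v)"
      using E_fixed act_divm[OF W_aut[OF g], of m] by (simp add: fun_eq_iff divm_def)
    finally show "divm \<Sigma> (f g) = divm \<Sigma> (\<lambda>v. act g m v - m v)" .
  qed
  then have "f = coboundary m"
    using f(1) by (intro extensionalityI[where A = W]) (simp_all add: coboundary_def Z1_def PiE_def)
  then show ?thesis using m(1) by (simp add: B1_eq)
qed

lemma PicInvGrp_simps:
  "carrier (PicInvGrp \<Sigma> J) = PicInv \<Sigma> J"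
  "C \<otimes>\<^bsub>PicInvGrp \<Sigma> J\<^esub> C' = C \<otimes>\<^bsub>Pic \<Sigma>\<^esub> C'"
  "H #>\<^bsub>PicInvGrp \<Sigma> J\<^esub> C = H #>\<^bsub>Pic \<Sigma>\<^esub> C"
  by (simp_all add: PicInvGrp_def r_coset_def)

lemma Coker_simps:
  "carrier (Coker \<Sigma> J) = rcosets\<^bsub>PicInvGrp \<Sigma> J\<^esub> invariant_classes"
  "Q \<otimes>\<^bsub>Coker \<Sigma> J\<^esub> Q' = Q <#>\<^bsub>PicInvGrp \<Sigma> J\<^esub> Q'"
  "\<one>\<^bsub>Coker \<Sigma> J\<^esub> = invariant_classes"
  by (simp_all add: Coker_def FactGroup_def)

(* The inverse of the connecting homomorphism Pic(X)^W -> H^1(W, M). *)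
definition coker_class :: "((int ^ 'n \<Rightarrow> int ^ 'n) \<Rightarrow> int ^ 'n \<Rightarrow> int) \<Rightarrow> (int ^ 'n \<Rightarrow> int) set set" where
  "coker_class f = invariant_classes #>\<^bsub>PicInvGrp \<Sigma> J\<^esub> cls \<Sigma> (SOME D. cobounds f D)"

lemma coker_class_eq:
  assumes "f \<in> Z1 W" "cobounds f D"
  shows "coker_class f = invariant_classes #>\<^bsub>PicInvGrp \<Sigma> J\<^esub> cls \<Sigma> D"
proof -
  let ?D = "SOME D. cobounds f D"
  obtain D0 where "cobounds f D0" using cocycle_cobounded[OF assms(1)] .
  then have D': "cobounds f ?D" by (rule someI[where P = "cobounds f"])
  let ?E = "\<lambda>v. ?D v - D v"
  have E: "?E \<in> TDivInv \<Sigma> W" by (rule cobounds_diff_TDivInv[OF D' assms(2)])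
  then have "cls \<Sigma> ?D = cls \<Sigma> ?E \<otimes>\<^bsub>Pic \<Sigma>\<^esub> cls \<Sigma> D"
    using cls_add[of ?E \<Sigma> D] cobounds_carrier[OF assms(2)] by (simp add: TDivInv_iff)
  then have "cls \<Sigma> ?D \<in> invariant_classes #>\<^bsub>Pic \<Sigma>\<^esub> cls \<Sigma> D"
    using E unfolding r_coset_def by blast
  then show ?thesis
    unfolding coker_class_def PicInvGrp_simps
    using Pic.repr_independence[OF _ cls_carrier[OF cobounds_carrier[OF assms(2)]] subgroup_invariant_classes]
    by simp
qed

lemma coker_class_in_Coker:
  assumes "f \<in> Z1 W" "cobounds f D"
  shows "coker_class f \<in> carrier (Coker \<Sigma> J)"
  using PicInvGrp.rcosetsI[of invariant_classes "cls \<Sigma> D"] invariant_classes_subset_PicInv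
    cobounds_cls_PicInv[OF assms]
  by (simp add: coker_class_eq[OF assms] Coker_simps PicInvGrp_simps)

lemma coker_class_hom: "coker_class \<in> hom (Z1grp W) (Coker \<Sigma> J)"
proof (rule homI)
  fix f assume "f \<in> carrier (Z1grp W)"
  then have f: "f \<in> Z1 W" by (simp add: Z1grp_def)
  obtain D where "cobounds f D" using cocycle_cobounded[OF f] .
  then show "coker_class f \<in> carrier (Coker \<Sigma> J)" by (rule coker_class_in_Coker[OF f])
next
  fix f f' assume ff': "f \<in> carrier (Z1grp W)" "f' \<in> carrier (Z1grp W)"
  then have Z: "f \<in> Z1 W" "f' \<in> Z1 W" "f \<otimes>\<^bsub>Z1grp W\<^esub> f' \<in> Z1 W" by (simp_all add: Z1grp_def Z1_add)
  obtain D where D1: "cobounds f D" using cocycle_cobounded[OF Z(1)] .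
  obtain D' where D2: "cobounds f' D'" using cocycle_cobounded[OF Z(2)] .
  note D = D1 D2
  have C: "cls \<Sigma> D \<in> carrier (PicInvGrp \<Sigma> J)" "cls \<Sigma> D' \<in> carrier (PicInvGrp \<Sigma> J)"
    using cobounds_cls_PicInv Z D by (simp_all add: PicInvGrp_simps)
  have "coker_class (f \<otimes>\<^bsub>Z1grp W\<^esub> f') = invariant_classes #>\<^bsub>PicInvGrp \<Sigma> J\<^esub> cls \<Sigma> (\<lambda>v. D v + D' v)"
    by (rule coker_class_eq[OF Z(3) cobounds_mult[OF D]])
  also have "cls \<Sigma> (\<lambda>v. D v + D' v) = cls \<Sigma> D \<otimes>\<^bsub>PicInvGrp \<Sigma> J\<^esub> cls \<Sigma> D'"
    using cls_add cobounds_carrier[OF D(1)] cobounds_carrier[OF D(2)] by (simp add: PicInvGrp_simps)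
  also have "invariant_classes #>\<^bsub>PicInvGrp \<Sigma> J\<^esub> (cls \<Sigma> D \<otimes>\<^bsub>PicInvGrp \<Sigma> J\<^esub> cls \<Sigma> D')
      = coker_class f \<otimes>\<^bsub>Coker \<Sigma> J\<^esub> coker_class f'"
    using normal.rcos_sum[OF normal_invariant_classes C]
    by (simp add: Coker_simps coker_class_eq[OF Z(1) D(1)] coker_class_eq[OF Z(2) D(2)])
  finally show "coker_class (f \<otimes>\<^bsub>Z1grp W\<^esub> f') = coker_class f \<otimes>\<^bsub>Coker \<Sigma> J\<^esub> coker_class f'" .
qed

lemma coker_class_surj: "coker_class ` carrier (Z1grp W) = carrier (Coker \<Sigma> J)"
proof (intro equalityI subsetI)
  fix Q assume "Q \<in> coker_class ` carrier (Z1grp W)"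
  then show "Q \<in> carrier (Coker \<Sigma> J)" using coker_class_hom by (auto simp: hom_def)
next
  fix Q assume "Q \<in> carrier (Coker \<Sigma> J)"
  then obtain C where C: "C \<in> PicInv \<Sigma> J" "Q = invariant_classes #>\<^bsub>PicInvGrp \<Sigma> J\<^esub> C"
    by (auto simp: Coker_simps RCOSETS_def PicInvGrp_simps)
  moreover obtain D where D: "D \<in> carrier (TDiv \<Sigma>)" "C = cls \<Sigma> D"
    using C(1) by (auto simp: PicInv_iff Pic_carrier)
  moreover obtain f where "f \<in> Z1 W" "cobounds f D" using PicInv_cobounded D C(1) by blast
  ultimately show "Q \<in> coker_class ` carrier (Z1grp W)"
    using coker_class_eq by (auto simp: Z1grp_def)
qed

lemma coker_class_kernel: "kernel (Z1grp W) (Coker \<Sigma> J) coker_class = B1 W"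
proof (intro equalityI subsetI)
  fix f assume "f \<in> kernel (Z1grp W) (Coker \<Sigma> J) coker_class"
  then have f: "f \<in> Z1 W" "coker_class f = invariant_classes" by (simp_all add: kernel_def Z1grp_def Coker_simps)
  obtain D where D: "cobounds f D" using cocycle_cobounded[OF f(1)] by blast
  have "cls \<Sigma> D \<in> invariant_classes #>\<^bsub>Pic \<Sigma>\<^esub> cls \<Sigma> D"
    by (rule Pic.rcos_self[OF cls_carrier[OF cobounds_carrier[OF D]] subgroup_invariant_classes])
  then have "cls \<Sigma> D \<in> invariant_classes" using f(2) coker_class_eq[OF f(1) D] by (simp add: PicInvGrp_simps)
  then show "f \<in> B1 W" by (rule cobounds_invariant_class_imp_B1[OF f(1) D])
next
  fix f assume "f \<in> B1 W"
  then obtain m where m: "m \<in> charlat" "f = coboundary m" by (auto simp: B1_eq)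
  then have Z: "f \<in> Z1 W" using coboundary_Z1 by simp
  have "coker_class f = invariant_classes #>\<^bsub>Pic \<Sigma>\<^esub> \<one>\<^bsub>Pic \<Sigma>\<^esub>"
    using coker_class_eq[OF coboundary_Z1[OF m(1)] coboundary_cobounds[OF m(1)]] cls_divm[OF m(1)] m(2)
    by (simp add: PicInvGrp_simps)
  also have "\<dots> = invariant_classes" using subgroup.subset[OF subgroup_invariant_classes] by simp
  finally show "f \<in> kernel (Z1grp W) (Coker \<Sigma> J) coker_class"
    using Z by (simp add: kernel_def Z1grp_def Coker_simps)
qed

theorem H1_iso_Coker: "H1 W \<cong> Coker \<Sigma> J"
proof -
  interpret group_hom "Z1grp W" "Coker \<Sigma> J" coker_class
    by (simp add: group_hom_def group_hom_axioms_def Z1grp.is_group group_Coker coker_class_hom)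
  have "Z1grp W Mod kernel (Z1grp W) (Coker \<Sigma> J) coker_class \<cong> Coker \<Sigma> J"
    by (rule FactGroup_iso[OF coker_class_surj])
  then show ?thesis by (simp add: H1_def coker_class_kernel)
qed

section \<open>The second isomorphism\<close>

lemma W_orbit_eq_rays_in_J_orbit:
  assumes \<rho>: "\<rho> \<in> rays \<Sigma>"
  shows "W_orbit \<rho> = {\<rho>' \<in> rays \<Sigma>. ray_class \<Sigma> \<rho>' \<in> {j (ray_class \<Sigma> \<rho>) | j. j \<in> J}}"
proof (intro equalityI subsetI)
  fix \<rho>' assume "\<rho>' \<in> W_orbit \<rho>"
  then obtain g where g: "g \<in> W" "\<rho>' = g \<rho>" by (auto simp: mem_W_orbit_iff)
  then show "\<rho>' \<in> {\<rho>' \<in> rays \<Sigma>. ray_class \<Sigma> \<rho>' \<in> {j (ray_class \<Sigma> \<rho>) | j. j \<in> J}}"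
    using \<rho> picact_ray_class[OF W_aut[OF g(1)] \<rho>]
    by (auto simp: aut_mem_rays_iff[OF W_aut[OF g(1)]] W_iff)
next
  fix \<rho>' assume "\<rho>' \<in> {\<rho>' \<in> rays \<Sigma>. ray_class \<Sigma> \<rho>' \<in> {j (ray_class \<Sigma> \<rho>) | j. j \<in> J}}"
  then obtain j where \<rho>': "\<rho>' \<in> rays \<Sigma>" and j: "j \<in> J" "ray_class \<Sigma> \<rho>' = j (ray_class \<Sigma> \<rho>)" by blast
  obtain g where g: "g \<in> W" "j = picact \<Sigma> g" using J_picactE[OF j(1)] .
  have g\<rho>: "g \<rho> \<in> rays \<Sigma>" "ray_class \<Sigma> (g \<rho>) = ray_class \<Sigma> \<rho>'"
    using \<rho> j(2) g picact_ray_class[OF W_aut[OF g(1)] \<rho>] aut_mem_rays_iff[OF W_aut[OF g(1)]] by auto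
  show "\<rho>' \<in> W_orbit \<rho>"
  proof (cases "g \<rho> = \<rho>'")
    case True
    then show ?thesis using g(1) by (auto simp: mem_W_orbit_iff)
  next
    case False
    obtain s where s: "s \<in> AutSigma \<Sigma>" "s (g \<rho>) = \<rho>'" "picact \<Sigma> s = \<one>\<^bsub>BijGroup (carrier (Pic \<Sigma>))\<^esub>"
      using reflection_swapping_rays[OF g\<rho>(1) \<rho>' False g\<rho>(2)] .
    then have "s \<circ> g \<in> W" using in_W_if_picact_trivial W_comp g(1) by blast
    then show ?thesis using s(2) by (auto simp: mem_W_orbit_iff intro!: bexI[of _ "s \<circ> g"])
  qed
qed

lemma J_orbit_ray_class:
  assumes \<rho>: "\<rho> \<in> rays \<Sigma>" and c: "c \<in> {j (ray_class \<Sigma> \<rho>) | j. j \<in> J}"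
  obtains g where "g \<in> W" "c = ray_class \<Sigma> (g \<rho>)" "mult_cls \<Sigma> c = mult_cls \<Sigma> (ray_class \<Sigma> \<rho>)"
proof -
  obtain j where j: "j \<in> J" "c = j (ray_class \<Sigma> \<rho>)" using c by blast
  obtain g where g: "g \<in> W" "j = picact \<Sigma> g" using J_picactE[OF j(1)] .
  show ?thesis
  proof (rule that[OF g(1)])
    show "c = ray_class \<Sigma> (g \<rho>)" using j(2) g(2) picact_ray_class[OF W_aut[OF g(1)] \<rho>] by simp
    show "mult_cls \<Sigma> c = mult_cls \<Sigma> (ray_class \<Sigma> \<rho>)"
      using j(2) g(2) mult_cls_picact[OF W_aut[OF g(1)] ray_class_carrier[OF \<rho>]] by simp
  qed
qed

lemma J_orbit_ray_class_subset:
  assumes "\<rho> \<in> rays \<Sigma>"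
  shows "{j (ray_class \<Sigma> \<rho>) | j. j \<in> J} \<subseteq> ray_class \<Sigma> ` rays \<Sigma>"
proof
  fix c assume "c \<in> {j (ray_class \<Sigma> \<rho>) | j. j \<in> J}"
  then obtain g where "g \<in> W" "c = ray_class \<Sigma> (g \<rho>)" by (rule J_orbit_ray_class[OF assms])
  then show "c \<in> ray_class \<Sigma> ` rays \<Sigma>" by (simp add: aut_mem_rays_iff[OF W_aut] assms)
qed

lemma cls_W_orbit:
  assumes \<rho>: "\<rho> \<in> rays \<Sigma>"
  shows "cls \<Sigma> (sum_prime_div (W_orbit \<rho>))
    = orbit_sum \<Sigma> J (ray_class \<Sigma> \<rho>) [^]\<^bsub>Pic \<Sigma>\<^esub> mult_cls \<Sigma> (ray_class \<Sigma> \<rho>)"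
proof -
  let ?c = "ray_class \<Sigma> \<rho>" and ?n = "mult_cls \<Sigma> (ray_class \<Sigma> \<rho>)"
  let ?Jc = "{j ?c | j. j \<in> J}" and ?R = "\<lambda>c. {\<rho>' \<in> rays \<Sigma>. ray_class \<Sigma> \<rho>' = c}"
  note Jc_sub = J_orbit_ray_class_subset[OF \<rho>]
  have Jc_carrier: "?Jc \<subseteq> carrier (Pic \<Sigma>)"
  proof
    fix c assume "c \<in> ?Jc"
    then obtain \<rho>' where "\<rho>' \<in> rays \<Sigma>" "c = ray_class \<Sigma> \<rho>'" using Jc_sub by blast
    then show "c \<in> carrier (Pic \<Sigma>)" by (simp add: ray_class_carrier)
  qed
  have "finite ?Jc" by (rule finite_subset[OF Jc_sub finite_imageI[OF finite_rays]])
  have orbit: "W_orbit \<rho> = \<Union> (?R ` ?Jc)"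
    unfolding W_orbit_eq_rays_in_J_orbit[OF \<rho>] by blast
  have "cls \<Sigma> (sum_prime_div (W_orbit \<rho>)) = finprod (Pic \<Sigma>) (ray_class \<Sigma>) (W_orbit \<rho>)"
    by (rule cls_sum_prime_div[OF finite_subset[OF W_orbit_rays[OF \<rho>] finite_rays] W_orbit_rays[OF \<rho>]])
  also have "\<dots> = finprod (Pic \<Sigma>) (\<lambda>c. finprod (Pic \<Sigma>) (ray_class \<Sigma>) (?R c)) ?Jc"
    unfolding orbit
  proof (rule Pic.finprod_UN_disjoint[OF \<open>finite ?Jc\<close>])
    show "pairwise (\<lambda>c c'. disjnt (?R c) (?R c')) ?Jc" by (auto simp: pairwise_def disjnt_def)
  qed (simp_all add: finite_rays ray_class_carrier)
  also have "\<dots> = finprod (Pic \<Sigma>) (\<lambda>c. c [^]\<^bsub>Pic \<Sigma>\<^esub> ?n) ?Jc"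
  proof (rule Pic.finprod_cong'[OF refl])
    show "(\<lambda>c. c [^]\<^bsub>Pic \<Sigma>\<^esub> ?n) \<in> ?Jc \<rightarrow> carrier (Pic \<Sigma>)" using Jc_carrier by auto
    fix c assume c: "c \<in> ?Jc"
    obtain g where "g \<in> W" "c = ray_class \<Sigma> (g \<rho>)" "mult_cls \<Sigma> c = ?n"
      by (rule J_orbit_ray_class[OF \<rho> c])
    with finprod_ray_class_fiber[OF subsetD[OF Jc_carrier c]]
    show "finprod (Pic \<Sigma>) (ray_class \<Sigma>) (?R c) = c [^]\<^bsub>Pic \<Sigma>\<^esub> ?n" by simp
  qed
  also have "\<dots> = finprod (Pic \<Sigma>) (\<lambda>c. c) ?Jc [^]\<^bsub>Pic \<Sigma>\<^esub> ?n"
    by (rule Pic.finprod_nat_pow) (use Jc_carrier in auto)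
  finally show ?thesis by (simp add: orbit_sum_def id_def)
qed

abbreviation PicT_generators :: "(int ^ 'n \<Rightarrow> int) set set" where
  "PicT_generators \<equiv> {orbit_sum \<Sigma> J c [^]\<^bsub>Pic \<Sigma>\<^esub> mult_cls \<Sigma> c | c. c \<in> ray_classes \<Sigma>}"

lemma TDivInv_const_on_W_orbit:
  assumes "E \<in> TDivInv \<Sigma> W" "v \<in> W_orbit \<rho>"
  shows "E v = E \<rho>"
proof -
  obtain g where g: "g \<in> W" "v = g \<rho>" using assms(2) by (auto simp: mem_W_orbit_iff)
  have "act g E = E" using assms(1) g(1) by (simp add: TDivInv_iff)
  from fun_cong[OF this, of v] show ?thesis using g by (simp add: act_apply W_inv_apply)
qed

lemma sum_prime_div_W_orbit_TDivInv:
  assumes "\<rho> \<in> rays \<Sigma>"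
  shows "sum_prime_div (W_orbit \<rho>) \<in> TDivInv \<Sigma> W"
proof -
  have "fun_inv g v \<in> W_orbit \<rho> \<longleftrightarrow> v \<in> W_orbit \<rho>" if "g \<in> W" for g v
    using W_orbit_closed[OF that, of "fun_inv g v"] W_orbit_closed[OF W_inv[OF that], of v]
    by (auto simp: W_apply_inv[OF that])
  then show ?thesis
    using W_orbit_rays[OF assms] by (auto simp: TDivInv_iff TDiv_carrier sum_prime_div_def act_apply)
qed

lemma cls_W_orbit_generator: "\<rho> \<in> rays \<Sigma> \<Longrightarrow> cls \<Sigma> (sum_prime_div (W_orbit \<rho>)) \<in> PicT_generators"
  by (auto simp: cls_W_orbit ray_classes_def)

lemma PicT_generators_subset: "PicT_generators \<subseteq> invariant_classes"
proof
  fix C assume "C \<in> PicT_generators"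
  then obtain \<rho> where "\<rho> \<in> rays \<Sigma>"
    "C = orbit_sum \<Sigma> J (ray_class \<Sigma> \<rho>) [^]\<^bsub>Pic \<Sigma>\<^esub> mult_cls \<Sigma> (ray_class \<Sigma> \<rho>)"
    by (auto simp: ray_classes_def)
  then show "C \<in> invariant_classes"
    using sum_prime_div_W_orbit_TDivInv by (simp add: cls_W_orbit[symmetric])
qed

lemma TDivInv_remove_W_orbit:
  assumes "E \<in> TDivInv \<Sigma> W" "\<rho> \<in> rays \<Sigma>"
  shows "(\<lambda>v. E v + (- E \<rho>) * sum_prime_div (W_orbit \<rho>) v) \<in> TDivInv \<Sigma> W"
    and "E v + (- E \<rho>) * sum_prime_div (W_orbit \<rho>) v = (if v \<in> W_orbit \<rho> then 0 else E v)"
proof -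
  show "(\<lambda>v. E v + (- E \<rho>) * sum_prime_div (W_orbit \<rho>) v) \<in> TDivInv \<Sigma> W"
    using assms(1) sum_prime_div_W_orbit_TDivInv[OF assms(2)]
    by (simp add: TDivInv_iff TDiv_carrier act_apply fun_eq_iff)
  show "E v + (- E \<rho>) * sum_prime_div (W_orbit \<rho>) v = (if v \<in> W_orbit \<rho> then 0 else E v)"
    using TDivInv_const_on_W_orbit[OF assms(1), of v \<rho>] by (simp add: sum_prime_div_def)
qed

(* Subtracting E(rho) times the orbit sum of rho removes the orbit of rho from the support. *)
lemma TDivInv_cls_in_generate:
  assumes "E \<in> TDivInv \<Sigma> W"
  shows "cls \<Sigma> E \<in> generate (Pic \<Sigma>) PicT_generators"
  using assms
proof (induction "card {v \<in> rays \<Sigma>. E v \<noteq> 0}" arbitrary: E rule: less_induct)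
  case less
  show ?case
  proof (cases "\<exists>\<rho>\<in>rays \<Sigma>. E \<rho> \<noteq> 0")
    case False
    then have "E = (\<lambda>v. 0)" using less.prems by (auto simp: TDivInv_iff TDiv_carrier fun_eq_iff)
    then show ?thesis by (simp add: cls_zero generate.one)
  next
    case True
    then obtain \<rho> where \<rho>: "\<rho> \<in> rays \<Sigma>" "E \<rho> \<noteq> 0" by blast
    let ?O = "sum_prime_div (W_orbit \<rho>)"
    define E' where "E' v = E v + (- E \<rho>) * ?O v" for v
    have E': "E' \<in> TDivInv \<Sigma> W" "E' v = (if v \<in> W_orbit \<rho> then 0 else E v)" for v
      using TDivInv_remove_W_orbit[OF less.prems \<rho>(1)] by (simp_all add: E'_def[abs_def])
    then have "{v \<in> rays \<Sigma>. E' v \<noteq> 0} = {v \<in> rays \<Sigma>. E v \<noteq> 0} - W_orbit \<rho>" by auto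
    moreover have "\<rho> \<in> {v \<in> rays \<Sigma>. E v \<noteq> 0} \<inter> W_orbit \<rho>" using \<rho> W_orbit_self by blast
    ultimately have "card {v \<in> rays \<Sigma>. E' v \<noteq> 0} < card {v \<in> rays \<Sigma>. E v \<noteq> 0}"
      by (intro psubset_card_mono) (auto simp: finite_rays)
    from less.hyps[OF this E'(1)] have IH: "cls \<Sigma> E' \<in> generate (Pic \<Sigma>) PicT_generators" .
    have O: "?O \<in> carrier (TDiv \<Sigma>)" "cls \<Sigma> ?O \<in> PicT_generators"
      using sum_prime_div_W_orbit_TDivInv[OF \<rho>(1)] cls_W_orbit_generator[OF \<rho>(1)]
      by (simp_all add: TDivInv_iff)
    have "cls \<Sigma> E = cls \<Sigma> (\<lambda>v. E' v + E \<rho> * ?O v)" by (simp add: E'_def)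
    also have "\<dots> = cls \<Sigma> E' \<otimes>\<^bsub>Pic \<Sigma>\<^esub> cls \<Sigma> ?O [^]\<^bsub>Pic \<Sigma>\<^esub> E \<rho>"
      using E'(1) O(1) by (intro cls_add_scale) (simp_all add: TDivInv_iff)
    finally have "cls \<Sigma> E = cls \<Sigma> E' \<otimes>\<^bsub>Pic \<Sigma>\<^esub> cls \<Sigma> ?O [^]\<^bsub>Pic \<Sigma>\<^esub> E \<rho>" .
    moreover have "cls \<Sigma> ?O [^]\<^bsub>Pic \<Sigma>\<^esub> E \<rho> \<in> generate (Pic \<Sigma>) PicT_generators"
      using PicT_generators_subset subgroup.subset[OF subgroup_invariant_classes] O(2)
      by (intro Pic.subgroup_int_pow_closed Pic.generate_is_subgroup generate.incl) auto
    ultimately show ?thesis using IH by (simp add: generate.eng)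
  qed
qed

lemma PicT_eq_invariant_classes: "PicT \<Sigma> J = invariant_classes"
proof
  show "PicT \<Sigma> J \<subseteq> invariant_classes"
    unfolding PicT_def
    by (rule Pic.generate_subgroup_incl[OF PicT_generators_subset subgroup_invariant_classes])
  show "invariant_classes \<subseteq> PicT \<Sigma> J"
    unfolding PicT_def using TDivInv_cls_in_generate by blast
qed

lemma Coker_eq_AmT: "Coker \<Sigma> J = AmT \<Sigma> J"
  by (simp add: Coker_def AmT_def PicT_eq_invariant_classes)

end

theorem lemma6p3:
  fixes \<Sigma> :: "(int ^ 'n) set set"
    and J :: "((int ^ 'n \<Rightarrow> int) set \<Rightarrow> (int ^ 'n \<Rightarrow> int) set) set"
  assumes "smooth_projective_toric \<Sigma>"
    and "subgroup J (BijGroup (carrier (Pic \<Sigma>)))"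
    and "J \<subseteq> AutP \<Sigma>"
  shows "H1 (Wgrp \<Sigma> J) \<cong> Coker \<Sigma> J \<and> Coker \<Sigma> J \<cong> AmT \<Sigma> J"
proof -
  have "smooth_complete_fan \<Sigma>"
    using assms(1) by (simp add: smooth_complete_fan_def smooth_projective_toric_def)
  then interpret fan_symmetries \<Sigma> J
    using assms(2,3) by (simp add: fan_symmetries_def fan_symmetries_axioms_def)
  show ?thesis using H1_iso_Coker Coker_eq_AmT iso_refl by simp
qed

end
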